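(* Let $d=2$, let $X\equiv\varphi$ be deterministic, where $\varphi(t)=(2\pi)^{-1}\exp(-\|t\|^2/2)$ is the two-dimensional standard normal density, let $\Psi\equiv1$ (so $\Phi$ is a homogeneous Poisson process on $\mathbb{R}^2$ with intensity $\tau^{-1}$), and let $p_0=1$. Then the intensity $\rho_\tau$ of the process of visible storm centres $\Phi^{\ast,0}_{\mathrm{th}}$ satisfies $$\lim_{\tau\to0}\rho_\tau(\xi)=\varphi(0)\Big[\int_{\mathbb{R}^2}\varphi(\xi-\xi')\,\mathrm{d}\xi'\Big]^{-1}=(2\pi)^{-1}\quad\text{for all }\xi\in\mathbb{R}^2.$$
   Context: Given $\tau>0$: each point $\xi$ of the homogeneous Poisson process $\Phi$ on $\mathbb{R}^2$ with intensity $\tau^{-1}$ independently gets the mark function $m_\xi(\cdot)=U_\xi\varphi(\cdot-\xi)$, with $U_\xi$ i.i.d. of density $\tau u^{-2}\mathbf 1_{(\tau,\infty)}(u)$, independent of $\Phi$. The process of visible storm centres $\Phi^{\ast,0}_{\mathrm{th}}$ consists of those $\xi\in\Phi$ such that no other point $\xi'\in\Phi$ has $m_{\xi'}(\xi)>m_\xi(\xi)$, i.e. $U_{\xi'}\varphi(\xi-\xi')>U_\xi\varphi(0)$. Its intensity $\rho_\tau$ is defined by $\mathbb{E}\#(\Phi^{\ast,0}_{\mathrm{th}}\cap B)=\int_B\rho_\tau$. *)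

theory Defs
  imports "HOL-Probability.Probability"
begin

definition ecard :: "'a set \<Rightarrow> ennreal" where
  "ecard S = (if finite S then of_nat (card S) else \<infinity>)"

definition poisson_process :: "'w measure \<Rightarrow> ('w \<Rightarrow> 'a set) \<Rightarrow> 'a measure \<Rightarrow> bool" where
  "poisson_process M P N \<longleftrightarrow>
     prob_space M \<and>
     (\<forall>A\<in>sets N. emeasure N A = \<infinity> \<longrightarrow> (AE \<omega> in M. infinite (P \<omega> \<inter> A))) \<and>
     (\<forall>A\<in>sets N. emeasure N A < \<infinity> \<longrightarrow>
        (AE \<omega> in M. finite (P \<omega> \<inter> A)) \<and>
        (\<forall>k::nat. {\<omega>\<in>space M. card (P \<omega> \<inter> A) = k} \<in> sets M \<and>
           prob_space.prob M {\<omega>\<in>space M. card (P \<omega> \<inter> A) = k}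
             = measure N A ^ k / fact k * exp (- measure N A))) \<and>
     (\<forall>I (A :: nat \<Rightarrow> 'a set). finite I \<longrightarrow> (\<forall>i\<in>I. A i \<in> sets N \<and> emeasure N (A i) < \<infinity>)
        \<longrightarrow> disjoint_family_on A I
        \<longrightarrow> prob_space.indep_vars M (\<lambda>_. count_space UNIV) (\<lambda>i \<omega>. card (P \<omega> \<inter> A i)) I)"

definition phi :: "real^2 \<Rightarrow> real" where
  "phi t = exp (- (norm t)\<^sup>2 / 2) / (2 * pi)"

text \<open>Intensity measure of the marked Poisson process on R^2 x R: ground intensity
  1/tau times Lebesgue measure, independent marks with density tau u^-2 on (tau, inf).\<close>
definition storm_intensity :: "real \<Rightarrow> ((real^2) \<times> real) measure" where
  "storm_intensity \<tau> = density (lborel \<Otimes>\<^sub>M lborel)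
     (\<lambda>(x, u). ennreal (1 / \<tau>) * ennreal (\<tau> / u\<^sup>2 * indicator {\<tau><..} u))"

definition visible :: "((real^2) \<times> real) set \<Rightarrow> (real^2) set" where
  "visible S = {\<xi>. \<exists>u. (\<xi>, u) \<in> S \<and>
      \<not> (\<exists>\<xi>' u'. (\<xi>', u') \<in> S \<and> \<xi>' \<noteq> \<xi> \<and> u' * phi (\<xi> - \<xi>') > u * phi 0)}"

end

theory Submission
  imports Defs "HOL-Real_Asymp.Real_Asymp"
begin

text \<open>
  A storm \<open>(\<xi>, u)\<close> is hidden exactly when some storm \<open>(\<xi>', u')\<close> has \<open>u' > u exp (\<parallel>\<xi> - \<xi>'\<parallel>\<^sup>2 / 2)\<close>.
  Under the intensity measure (ground intensity \<open>1 / \<tau>\<close>, marks with density \<open>\<tau> u\<^sup>-\<^sup>2\<close> on \<open>(\<tau>, \<infinity>)\<close>)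
  this region has mass \<open>\<integral> exp (- \<parallel>x\<parallel>\<^sup>2 / 2) / u dx = 2 \<pi> / u\<close>, so a storm with mark \<open>u\<close> is visible with
  probability \<open>exp (- 2 \<pi> / u)\<close> and \<open>\<rho>\<^sub>\<tau> = \<integral>\<^sub>\<tau>\<^sup>\<infinity> u\<^sup>-\<^sup>2 exp (- 2 \<pi> / u) du = (1 - exp (- 2 \<pi> / \<tau>)) / (2 \<pi>)\<close>,
  which tends to \<open>1 / (2 \<pi>)\<close>.

  Since only Poisson counts, independent on disjoint sets, are available, this computation is carried out by
  discretisation: over a small rectangle the storms are sorted into cells by their reciprocal mark \<open>1 / u\<close>,
  in bins of width \<open>\<Delta>\<close>. A storm alone in its cell, with no storm in the region that could dominate some
  point of the cell, is visible; conversely a visible storm lies in a cell for which the region of storms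
  dominating every point of the cell is empty. Taking expectations yields Riemann sums for the integral above
  that bracket the mean of \<open>\<rho>\<^sub>\<tau>\<close> over the rectangle; shrinking the rectangle (continuity of \<open>\<rho>\<^sub>\<tau>\<close>) and
  letting \<open>\<Delta> \<rightarrow> 0\<close> gives the exact value of \<open>\<rho>\<^sub>\<tau>\<close>.
\<close>

lemma nn_integral_gaussian:
  "(\<integral>\<^sup>+t. ennreal (exp (- (t - c)\<^sup>2 / 2)) \<partial>lborel) = ennreal (sqrt (2 * pi))"
proof -
  have "(\<integral>\<^sup>+t. ennreal (exp (- (t - c)\<^sup>2 / 2)) \<partial>lborel)
      = (\<integral>\<^sup>+t. ennreal (sqrt (2 * pi)) * ennreal (normal_density c 1 t) \<partial>lborel)"
    by (simp add: normal_density_def ennreal_mult[symmetric])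
  also have "\<dots> = ennreal (sqrt (2 * pi)) * (\<integral>\<^sup>+t. ennreal (normal_density c 1 t) \<partial>lborel)"
    by (rule nn_integral_cmult) simp
  also have "(\<integral>\<^sup>+t. ennreal (normal_density c 1 t) \<partial>lborel) = 1"
    by (subst nn_integral_eq_integral) auto
  finally show ?thesis by simp
qed

lemma nn_integral_gaussian_two_tails:
  "(\<integral>\<^sup>+t\<in>{..a}. ennreal (exp (- (t - a)\<^sup>2 / 2)) \<partial>lborel)
     + (\<integral>\<^sup>+t\<in>{b..}. ennreal (exp (- (t - b)\<^sup>2 / 2)) \<partial>lborel) = ennreal (sqrt (2 * pi))"
proof -
  let ?g = "\<lambda>t::real. ennreal (exp (- t\<^sup>2 / 2))"
  have shift: "(\<integral>\<^sup>+t. ?g (t - c) * indicator A t \<partial>lborel) = (\<integral>\<^sup>+x. ?g x * indicator A (c + x) \<partial>lborel)"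
    if [measurable]: "A \<in> sets borel" for A c
    using nn_integral_real_affine[of "\<lambda>t. ?g (t - c) * indicator A t" 1 c] by simp
  have "(\<integral>\<^sup>+t\<in>{..a}. ?g (t - a) \<partial>lborel) + (\<integral>\<^sup>+t\<in>{b..}. ?g (t - b) \<partial>lborel)
      = (\<integral>\<^sup>+x. ?g x * indicator {..0} x \<partial>lborel) + (\<integral>\<^sup>+x. ?g x * indicator {0..} x \<partial>lborel)"
    by (subst (1 2) shift) (auto intro!: arg_cong2[where f="(+)"] nn_integral_cong split: split_indicator)
  also have "\<dots> = (\<integral>\<^sup>+x. ?g x * indicator {..0} x + ?g x * indicator {0..} x \<partial>lborel)"
    by (rule nn_integral_add[symmetric]) auto
  also have "\<dots> = (\<integral>\<^sup>+x. ?g (x - 0) \<partial>lborel)"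
    by (rule nn_integral_cong_AE) (use AE_lborel_singleton[of 0] in \<open>auto split: split_indicator\<close>)
  finally show ?thesis
    by (simp only: nn_integral_gaussian)
qed

definition near_dist :: "real \<Rightarrow> real \<Rightarrow> real \<Rightarrow> real" where
  "near_dist a b t = max 0 (max (a - t) (t - b))"

definition far_dist :: "real \<Rightarrow> real \<Rightarrow> real \<Rightarrow> real" where
  "far_dist a b t = max \<bar>t - a\<bar> \<bar>t - b\<bar>"

lemma borel_measurable_near_dist [measurable]: "near_dist a b \<in> borel_measurable borel"
  unfolding near_dist_def by measurable

lemma borel_measurable_far_dist [measurable]: "far_dist a b \<in> borel_measurable borel"
  unfolding far_dist_def by measurable

lemma near_dist_sq_le: "a \<le> s \<Longrightarrow> s \<le> b \<Longrightarrow> (near_dist a b t)\<^sup>2 \<le> (s - t)\<^sup>2"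
  unfolding abs_le_square_iff[symmetric] near_dist_def by auto

lemma far_dist_sq_ge: "a \<le> s \<Longrightarrow> s \<le> b \<Longrightarrow> (s - t)\<^sup>2 \<le> (far_dist a b t)\<^sup>2"
  unfolding abs_le_square_iff[symmetric] far_dist_def by auto

lemma near_dist_sq_le_far_dist_sq: "(near_dist a b t)\<^sup>2 \<le> (far_dist a b t)\<^sup>2"
  by (rule power_mono) (auto simp: near_dist_def far_dist_def)

lemma nn_integral_gaussian_near_dist_le:
  assumes "a \<le> b"
  shows "(\<integral>\<^sup>+t. ennreal (exp (- (near_dist a b t)\<^sup>2 / 2)) \<partial>lborel) \<le> ennreal (sqrt (2 * pi) + (b - a))"
proof -
  let ?g = "\<lambda>c t::real. ennreal (exp (- (t - c)\<^sup>2 / 2))"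
  have "(\<integral>\<^sup>+t. ennreal (exp (- (near_dist a b t)\<^sup>2 / 2)) \<partial>lborel)
      \<le> (\<integral>\<^sup>+t. (?g a t * indicator {..a} t + ?g b t * indicator {b..} t) + indicator {a..b} t \<partial>lborel)"
    by (rule nn_integral_mono)
      (auto simp: near_dist_def max_def power2_commute split: split_indicator)
  also have "\<dots> = (\<integral>\<^sup>+t\<in>{..a}. ?g a t \<partial>lborel) + (\<integral>\<^sup>+t\<in>{b..}. ?g b t \<partial>lborel) + ennreal (b - a)"
    using assms by (simp add: nn_integral_add)
  also have "\<dots> = ennreal (sqrt (2 * pi) + (b - a))"
    using assms nn_integral_gaussian_two_tails[of a b] by simp
  finally show ?thesis .
qed

lemma nn_integral_gaussian_far_dist_ge:
  assumes "a \<le> b"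
  shows "ennreal (sqrt (2 * pi) - 2 * (b - a)) \<le> (\<integral>\<^sup>+t. ennreal (exp (- (far_dist a b t)\<^sup>2 / 2)) \<partial>lborel)"
proof -
  let ?g = "\<lambda>c t::real. ennreal (exp (- (t - c)\<^sup>2 / 2))"
  have "ennreal (sqrt (2 * pi)) = (\<integral>\<^sup>+t. ?g b t * indicator {..b} t + ?g a t * indicator {a..} t \<partial>lborel)"
    using nn_integral_gaussian_two_tails[of b a] by (simp add: nn_integral_add)
  also have "\<dots> \<le> (\<integral>\<^sup>+t. ennreal (exp (- (far_dist a b t)\<^sup>2 / 2)) + 2 * indicator {a..b} t \<partial>lborel)"
  proof (rule nn_integral_mono)
    fix t
    show "?g b t * indicator {..b} t + ?g a t * indicator {a..} t
        \<le> ennreal (exp (- (far_dist a b t)\<^sup>2 / 2)) + 2 * indicator {a..b} t"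
    proof (cases "t < a \<or> b < t")
      case True
      then show ?thesis
        using assms by (auto simp: far_dist_def power2_commute indicator_def)
    next
      case False
      have "?g b t + ?g a t \<le> 2"
        using add_mono[of "?g b t" 1 "?g a t" 1] by simp
      also have "\<dots> \<le> ennreal (exp (- (far_dist a b t)\<^sup>2 / 2)) + 2 * indicator {a..b} t"
        using False by simp
      finally show ?thesis
        using False by (simp add: indicator_def)
    qed
  qed
  also have "\<dots> = (\<integral>\<^sup>+t. ennreal (exp (- (far_dist a b t)\<^sup>2 / 2)) \<partial>lborel) + ennreal (2 * (b - a))"
  proof -
    have "2 * ennreal (b - a) = ennreal (2 * (b - a))"
      using assms by (subst ennreal_mult) auto
    then show ?thesis
      using assms by (simp add: nn_integral_add nn_integral_cmult)
  qed
  finally show ?thesis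
    using assms by (simp add: ennreal_minus[symmetric] ennreal_minus_le_iff add.commute)
qed

lemma nn_integral_inverse_square_Ioi:
  assumes "0 < c"
  shows "(\<integral>\<^sup>+u\<in>{c<..}. ennreal (1 / u\<^sup>2) \<partial>lborel) = ennreal (1 / c)"
proof -
  have "(\<integral>\<^sup>+u\<in>{c<..}. ennreal (1 / u\<^sup>2) \<partial>lborel) = (\<integral>\<^sup>+u\<in>{c..}. ennreal (1 / u\<^sup>2) \<partial>lborel)"
    by (rule nn_integral_cong_AE) (use AE_lborel_singleton[of c] in \<open>auto split: split_indicator\<close>)
  also have "\<dots> = ennreal (0 - (- 1 / c))"
  proof (rule nn_integral_FTC_atLeast)
    fix x assume "c \<le> x"
    then show "((\<lambda>u. - 1 / u) has_real_derivative 1 / x\<^sup>2) (at x)"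
      using assms by (auto intro!: derivative_eq_intros simp: power2_eq_square)
  qed (auto, real_asymp)
  finally show ?thesis by simp
qed

lemma nn_integral_inverse_square_Ioc:
  assumes "0 < a" "a \<le> b"
  shows "(\<integral>\<^sup>+u\<in>{a<..b}. ennreal (1 / u\<^sup>2) \<partial>lborel) = ennreal (1 / a - 1 / b)"
proof -
  have "(\<integral>\<^sup>+u\<in>{a<..b}. ennreal (1 / u\<^sup>2) \<partial>lborel) = (\<integral>\<^sup>+u\<in>{a..b}. ennreal (1 / u\<^sup>2) \<partial>lborel)"
    by (rule nn_integral_cong_AE) (use AE_lborel_singleton[of a] in \<open>auto split: split_indicator\<close>)
  also have "\<dots> = ennreal (- 1 / b - (- 1 / a))"
  proof (rule nn_integral_FTC_Icc)
    fix x assume "x \<in> {a..b}"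
    then show "((\<lambda>u. - 1 / u) has_real_derivative 1 / x\<^sup>2) (at x)"
      using assms by (auto intro!: derivative_eq_intros simp: power2_eq_square)
  qed (use assms in auto)
  finally show ?thesis by simp
qed

lemma Basis_real2: "(Basis :: (real^2) set) = {axis 1 1, axis 2 1}"
  by (auto simp: Basis_vec_def UNIV_2)

lemma nn_integral_real2_prod:
  fixes f g :: "real \<Rightarrow> real"
  assumes [measurable]: "f \<in> borel_measurable borel" "g \<in> borel_measurable borel"
    and "\<And>t. 0 \<le> f t" "\<And>t. 0 \<le> g t"
  shows "(\<integral>\<^sup>+x. ennreal (f (x $ 1) * g (x $ 2)) \<partial>(lborel :: (real^2) measure))
     = (\<integral>\<^sup>+t. ennreal (f t) \<partial>lborel) * (\<integral>\<^sup>+t. ennreal (g t) \<partial>lborel)"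
proof -
  define h where "h b = (if b = axis 1 1 then f else g)" for b :: "real^2"
  have axis_neq: "axis (1::2) (1::real) \<noteq> axis 2 1"
    by (simp add: axis_eq_axis)
  have "(\<integral>\<^sup>+x. (\<Prod>b\<in>Basis. ennreal (h b (x \<bullet> b))) \<partial>lborel) = (\<Prod>b\<in>Basis. (\<integral>\<^sup>+t. ennreal (h b t) \<partial>lborel))"
    by (rule nn_integral_lborel_prod) (auto simp: h_def assms)
  then show ?thesis
    using axis_neq by (simp add: Basis_real2 h_def cart_eq_inner_axis ennreal_mult assms)
qed

lemma norm_real2_sq: "(norm (x :: real^2))\<^sup>2 = (x $ 1)\<^sup>2 + (x $ 2)\<^sup>2"
  by (simp add: norm_vec_def L2_set_def sum_2)

lemma sums_poisson_mean: "(\<lambda>i. real i * m ^ i / fact i) sums (m * exp m)"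
proof -
  have "(\<lambda>n. m * (m ^ n / fact n)) sums (m * exp m)"
    using sums_mult[OF exp_converges[of m], of m] by (simp add: divide_inverse mult.commute)
  moreover have "real (Suc n) * m ^ Suc n / fact (Suc n) = m * (m ^ n / fact n)" for n
    by (simp del: of_nat_Suc)
  ultimately show ?thesis
    using sums_Suc_iff[of "\<lambda>i. real i * m ^ i / fact i"] by simp
qed

lemma sum_exp_geometric:
  assumes "0 < a"
  shows "(\<Sum>j<K. exp (- (real j * a))) = (1 - exp (- (real K * a))) / (1 - exp (- a))"
proof -
  have power: "exp (- (real j * a)) = exp (- a) ^ j" for j
    by (simp add: exp_of_nat_mult[symmetric] mult.commute)
  have "(\<Sum>j<K. exp (- (real j * a))) = (\<Sum>j<K. exp (- a) ^ j)"
    by (simp only: power)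
  also have "\<dots> = (1 - exp (- a) ^ K) / (1 - exp (- a))"
    using assms by (simp add: sum_gp_strict)
  finally show ?thesis
    by (simp only: power)
qed

section \<open>The intensity measure of the storms\<close>

lemma sets_storm_intensity [measurable_cong]: "sets (storm_intensity \<tau>) = sets (borel \<Otimes>\<^sub>M borel)"
  unfolding storm_intensity_def by (simp cong: sets_pair_measure_cong)

lemma emeasure_storm_intensity:
  assumes "0 < \<tau>" and A: "A \<in> sets (borel \<Otimes>\<^sub>M borel)"
  shows "emeasure (storm_intensity \<tau>) A
     = (\<integral>\<^sup>+x. (\<integral>\<^sup>+u\<in>{\<tau><..}. ennreal (1 / u\<^sup>2) * indicator A (x, u) \<partial>lborel) \<partial>lborel)"
proof -
  have A': "A \<in> sets (lborel \<Otimes>\<^sub>M lborel)"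
    using A by (simp cong: sets_pair_measure_cong)
  have "emeasure (storm_intensity \<tau>) A
     = (\<integral>\<^sup>+p. (case p of (x, u) \<Rightarrow> ennreal (1 / \<tau>) * ennreal (\<tau> / u\<^sup>2 * indicator {\<tau><..} u)) * indicator A p
         \<partial>(lborel \<Otimes>\<^sub>M lborel))"
    unfolding storm_intensity_def by (rule emeasure_density) (use A' in auto)
  also have "\<dots> = (\<integral>\<^sup>+p. ennreal (1 / (snd p)\<^sup>2) * indicator {\<tau><..} (snd p) * indicator A p \<partial>(lborel \<Otimes>\<^sub>M lborel))"
    by (rule nn_integral_cong)
      (use assms(1) in \<open>auto simp: ennreal_mult[symmetric] split: split_indicator\<close>)
  also have "\<dots> = (\<integral>\<^sup>+x. (\<integral>\<^sup>+u\<in>{\<tau><..}. ennreal (1 / u\<^sup>2) * indicator A (x, u) \<partial>lborel) \<partial>lborel)"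
    by (subst lborel.nn_integral_fst[symmetric]) (use A' in \<open>auto simp: mult_ac\<close>)
  finally show ?thesis .
qed

definition rect :: "real \<Rightarrow> real \<Rightarrow> real \<Rightarrow> real \<Rightarrow> (real^2) set" where
  "rect a1 b1 a2 b2 = {x. a1 \<le> x $ 1 \<and> x $ 1 \<le> b1 \<and> a2 \<le> x $ 2 \<and> x $ 2 \<le> b2}"

lemma sets_rect [measurable]: "rect a1 b1 a2 b2 \<in> sets borel"
proof -
  have "rect a1 b1 a2 b2 = {x\<in>space borel. a1 \<le> x $ 1 \<and> x $ 1 \<le> b1 \<and> a2 \<le> x $ 2 \<and> x $ 2 \<le> b2}"
    by (simp add: rect_def)
  also have "\<dots> \<in> sets borel" by measurable
  finally show ?thesis .
qed

lemma emeasure_lborel_rect: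
  assumes "a1 \<le> b1" "a2 \<le> b2"
  shows "emeasure lborel (rect a1 b1 a2 b2) = ennreal ((b1 - a1) * (b2 - a2))"
proof -
  have "emeasure lborel (rect a1 b1 a2 b2) = (\<integral>\<^sup>+x. indicator (rect a1 b1 a2 b2) x \<partial>lborel)"
    by simp
  also have "\<dots> = (\<integral>\<^sup>+x. ennreal (indicator {a1..b1} ((x :: real^2) $ 1) * indicator {a2..b2} (x $ 2)) \<partial>lborel)"
    by (rule nn_integral_cong) (auto simp: rect_def split: split_indicator)
  also have "\<dots> = ennreal ((b1 - a1) * (b2 - a2))"
    using assms by (subst nn_integral_real2_prod) (auto simp: ennreal_mult ennreal_indicator)
  finally show ?thesis .
qed

definition recip_band :: "real \<Rightarrow> real \<Rightarrow> real set" where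
  "recip_band \<alpha> \<beta> = {u. 0 < u \<and> \<alpha> \<le> 1 / u \<and> 1 / u < \<beta>}"

lemma sets_recip_band [measurable]: "recip_band \<alpha> \<beta> \<in> sets borel"
proof -
  have "recip_band \<alpha> \<beta> = {u\<in>space borel. 0 < u \<and> \<alpha> \<le> 1 / u \<and> 1 / u < \<beta>}"
    by (simp add: recip_band_def)
  also have "\<dots> \<in> sets borel" by measurable
  finally show ?thesis .
qed

lemma recip_band_eq_Ioi: "0 < \<beta> \<Longrightarrow> recip_band 0 \<beta> = {1 / \<beta><..}"
proof (intro set_eqI iffI)
  fix u assume "0 < \<beta>" "u \<in> {1 / \<beta><..}"
  moreover from this have "0 < u"
    by (smt (verit) greaterThan_iff zero_less_divide_1_iff)
  ultimately show "u \<in> recip_band 0 \<beta>"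
    by (auto simp: recip_band_def field_simps)
qed (auto simp: recip_band_def field_simps)

lemma recip_band_eq_Ioc: "0 < \<alpha> \<Longrightarrow> 0 < \<beta> \<Longrightarrow> recip_band \<alpha> \<beta> = {1 / \<beta><..1 / \<alpha>}"
proof (intro set_eqI iffI)
  fix u assume "0 < \<alpha>" "0 < \<beta>" "u \<in> {1 / \<beta><..1 / \<alpha>}"
  moreover from this have "0 < u"
    by (smt (verit) greaterThanAtMost_iff zero_less_divide_1_iff)
  ultimately show "u \<in> recip_band \<alpha> \<beta>"
    by (auto simp: recip_band_def field_simps)
qed (auto simp: recip_band_def field_simps)

lemma nn_integral_inverse_square_recip_band:
  assumes "0 < \<tau>" "0 \<le> \<alpha>" "\<alpha> < \<beta>" "\<beta> * \<tau> \<le> 1"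
  shows "(\<integral>\<^sup>+u\<in>{\<tau><..}. ennreal (1 / u\<^sup>2) * indicator (recip_band \<alpha> \<beta>) u \<partial>lborel) = ennreal (\<beta> - \<alpha>)"
proof -
  have \<beta>: "0 < \<beta>" "\<tau> \<le> 1 / \<beta>"
    using assms by (auto simp: field_simps)
  show ?thesis
  proof (cases "\<alpha> = 0")
    case True
    then have "(\<integral>\<^sup>+u\<in>{\<tau><..}. ennreal (1 / u\<^sup>2) * indicator (recip_band \<alpha> \<beta>) u \<partial>lborel)
        = (\<integral>\<^sup>+u\<in>{1 / \<beta><..}. ennreal (1 / u\<^sup>2) \<partial>lborel)"
      using \<beta> by (intro nn_integral_cong) (auto simp: recip_band_eq_Ioi split: split_indicator)
    then show ?thesis
      using \<beta> True by (simp add: nn_integral_inverse_square_Ioi)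
  next
    case False
    then have \<alpha>: "0 < \<alpha>"
      using assms by simp
    then have "(\<integral>\<^sup>+u\<in>{\<tau><..}. ennreal (1 / u\<^sup>2) * indicator (recip_band \<alpha> \<beta>) u \<partial>lborel)
        = (\<integral>\<^sup>+u\<in>{1 / \<beta><..1 / \<alpha>}. ennreal (1 / u\<^sup>2) \<partial>lborel)"
      using \<beta> by (intro nn_integral_cong) (auto simp: recip_band_eq_Ioc split: split_indicator)
    then show ?thesis
      using \<alpha> \<beta> assms by (simp add: nn_integral_inverse_square_Ioc field_simps)
  qed
qed

lemma emeasure_storm_intensity_rect_band:
  assumes "0 < \<tau>" "0 \<le> \<alpha>" "\<alpha> < \<beta>" "\<beta> * \<tau> \<le> 1" "a1 \<le> b1" "a2 \<le> b2"
  shows "emeasure (storm_intensity \<tau>) (rect a1 b1 a2 b2 \<times> recip_band \<alpha> \<beta>)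
    = ennreal ((b1 - a1) * (b2 - a2) * (\<beta> - \<alpha>))"
proof -
  have "emeasure (storm_intensity \<tau>) (rect a1 b1 a2 b2 \<times> recip_band \<alpha> \<beta>)
      = (\<integral>\<^sup>+x. indicator (rect a1 b1 a2 b2) x
           * (\<integral>\<^sup>+u\<in>{\<tau><..}. ennreal (1 / u\<^sup>2) * indicator (recip_band \<alpha> \<beta>) u \<partial>lborel) \<partial>lborel)"
    using assms
    by (subst emeasure_storm_intensity)
      (auto intro!: nn_integral_cong simp: nn_integral_cmult[symmetric] mult_ac split: split_indicator)
  also have "\<dots> = emeasure lborel (rect a1 b1 a2 b2) * ennreal (\<beta> - \<alpha>)"
    using assms by (simp add: nn_integral_inverse_square_recip_band nn_integral_multc)
  also have "\<dots> = ennreal ((b1 - a1) * (b2 - a2) * (\<beta> - \<alpha>))"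
    using assms by (simp add: emeasure_lborel_rect ennreal_mult)
  finally show ?thesis .
qed

text \<open>Since marks exceed \<tau>, a threshold \<open>w x / v \<ge> 1 / v \<ge> \<tau>\<close> is never cut off by the mark density.\<close>
lemma emeasure_storm_intensity_above:
  assumes "0 < \<tau>" "0 < v" "v * \<tau> \<le> 1"
    and [measurable]: "w \<in> borel_measurable borel" "C \<in> sets borel" and w: "\<And>x. 1 \<le> w x"
  shows "emeasure (storm_intensity \<tau>) {(x, u). x \<in> C \<and> w x < u * v}
    = (\<integral>\<^sup>+x\<in>C. ennreal (v / w x) \<partial>lborel)"
proof -
  have region: "{(x, u). x \<in> C \<and> w x < u * v} \<in> sets (borel \<Otimes>\<^sub>M borel)"
  proof -
    have "{(x, u). x \<in> C \<and> w x < u * v} = {p\<in>space (borel \<Otimes>\<^sub>M borel). fst p \<in> C \<and> w (fst p) < snd p * v}"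
      by (auto simp: space_pair_measure)
    also have "\<dots> \<in> sets (borel \<Otimes>\<^sub>M borel)" by measurable
    finally show ?thesis .
  qed
  have inner: "(\<integral>\<^sup>+u\<in>{\<tau><..}. ennreal (1 / u\<^sup>2) * indicator {(x, u). x \<in> C \<and> w x < u * v} (x, u) \<partial>lborel)
      = ennreal (v / w x) * indicator C x" for x
  proof -
    have "\<tau> * v \<le> w x"
      using assms w[of x] by (smt (verit) mult.commute)
    then have "w x < u * v \<longleftrightarrow> w x / v < u" "w x < u * v \<Longrightarrow> \<tau> < u" for u
      using assms by (auto simp: field_simps) (smt (verit) mult_right_mono)
    then have "(\<integral>\<^sup>+u\<in>{\<tau><..}. ennreal (1 / u\<^sup>2) * indicator {(x, u). x \<in> C \<and> w x < u * v} (x, u) \<partial>lborel)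
        = (\<integral>\<^sup>+u. indicator C x * (ennreal (1 / u\<^sup>2) * indicator {w x / v<..} u) \<partial>lborel)"
      by (intro nn_integral_cong) (auto split: split_indicator)
    also have "\<dots> = indicator C x * (\<integral>\<^sup>+u\<in>{w x / v<..}. ennreal (1 / u\<^sup>2) \<partial>lborel)"
      by (rule nn_integral_cmult) simp
    also have "(\<integral>\<^sup>+u\<in>{w x / v<..}. ennreal (1 / u\<^sup>2) \<partial>lborel) = ennreal (1 / (w x / v))"
      using assms(2) w[of x] by (intro nn_integral_inverse_square_Ioi divide_pos_pos) linarith+
    finally show ?thesis
      by (simp add: mult.commute)
  qed
  show ?thesis
    by (simp only: emeasure_storm_intensity[OF assms(1) region] inner)
qed

lemma emeasure_storm_intensity_small_marks:
  assumes "0 < \<tau>" "A \<in> sets borel"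
  shows "emeasure (storm_intensity \<tau>) (A \<times> {..\<tau>}) = 0"
proof -
  have "A \<times> {..\<tau>} \<in> sets (borel \<Otimes>\<^sub>M borel)"
    using assms(2) by simp
  moreover have "(\<integral>\<^sup>+u\<in>{\<tau><..}. ennreal (1 / u\<^sup>2) * indicator (A \<times> {..\<tau>}) (x, u) \<partial>lborel) = 0" for x
    by (subst nn_integral_0_iff_AE) (auto split: split_indicator)
  ultimately show ?thesis
    using assms(1) by (simp add: emeasure_storm_intensity)
qed

section \<open>Domination over a rectangle\<close>

lemma phi_0: "phi 0 = 1 / (2 * pi)"
  by (simp add: phi_def)

lemma dominates_iff: "u * phi 0 < u' * phi (\<xi> - \<xi>') \<longleftrightarrow> u * exp ((norm (\<xi> - \<xi>'))\<^sup>2 / 2) < u'"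
proof -
  define r where "r = (norm (\<xi> - \<xi>'))\<^sup>2 / 2"
  have "u * phi 0 < u' * phi (\<xi> - \<xi>') \<longleftrightarrow> u < u' * exp (- r)"
    by (simp add: phi_def r_def divide_less_cancel field_simps)
  also have "\<dots> \<longleftrightarrow> u * exp r < u'"
    by (simp add: exp_minus field_simps)
  finally show ?thesis
    by (simp add: r_def)
qed

text \<open>Lower and upper bounds for \<open>exp (\<parallel>\<xi> - x\<parallel>\<^sup>2 / 2)\<close> over \<open>\<xi> \<in> rect a1 b1 a2 b2\<close> that factor over the
  coordinates of \<open>x\<close>, so that their reciprocals integrate to products of one-dimensional Gaussian integrals.\<close>
definition near_weight :: "real \<Rightarrow> real \<Rightarrow> real \<Rightarrow> real \<Rightarrow> real^2 \<Rightarrow> real" where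
  "near_weight a1 b1 a2 b2 x = exp ((near_dist a1 b1 (x $ 1))\<^sup>2 / 2) * exp ((near_dist a2 b2 (x $ 2))\<^sup>2 / 2)"

definition far_weight :: "real \<Rightarrow> real \<Rightarrow> real \<Rightarrow> real \<Rightarrow> real^2 \<Rightarrow> real" where
  "far_weight a1 b1 a2 b2 x = exp ((far_dist a1 b1 (x $ 1))\<^sup>2 / 2) * exp ((far_dist a2 b2 (x $ 2))\<^sup>2 / 2)"

lemma borel_measurable_near_weight [measurable]: "near_weight a1 b1 a2 b2 \<in> borel_measurable borel"
  unfolding near_weight_def by measurable

lemma borel_measurable_far_weight [measurable]: "far_weight a1 b1 a2 b2 \<in> borel_measurable borel"
  unfolding far_weight_def by measurable

lemma near_weight_ge_1: "1 \<le> near_weight a1 b1 a2 b2 x"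
  by (simp add: near_weight_def exp_add[symmetric])

lemma far_weight_ge_1: "1 \<le> far_weight a1 b1 a2 b2 x"
  by (simp add: far_weight_def exp_add[symmetric])

lemma near_weight_le_far_weight: "near_weight a1 b1 a2 b2 x \<le> far_weight a1 b1 a2 b2 x"
  unfolding near_weight_def far_weight_def exp_add[symmetric]
  using near_dist_sq_le_far_dist_sq by (simp add: add_mono)

lemma near_weight_eq_1: "\<xi> \<in> rect a1 b1 a2 b2 \<Longrightarrow> near_weight a1 b1 a2 b2 \<xi> = 1"
  by (simp add: near_weight_def rect_def near_dist_def)

lemma near_weight_le: "\<xi> \<in> rect a1 b1 a2 b2 \<Longrightarrow> near_weight a1 b1 a2 b2 x \<le> exp ((norm (\<xi> - x))\<^sup>2 / 2)"
  unfolding near_weight_def norm_real2_sq exp_add[symmetric] rect_def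
  using near_dist_sq_le[of a1 "\<xi> $ 1" b1 "x $ 1"] near_dist_sq_le[of a2 "\<xi> $ 2" b2 "x $ 2"] by auto

lemma far_weight_ge: "\<xi> \<in> rect a1 b1 a2 b2 \<Longrightarrow> exp ((norm (\<xi> - x))\<^sup>2 / 2) \<le> far_weight a1 b1 a2 b2 x"
  unfolding far_weight_def norm_real2_sq exp_add[symmetric] rect_def
  using far_dist_sq_ge[of a1 "\<xi> $ 1" b1 "x $ 1"] far_dist_sq_ge[of a2 "\<xi> $ 2" b2 "x $ 2"] by auto

lemma nn_integral_inverse_exp_weight:
  fixes f g :: "real \<Rightarrow> real"
  assumes [measurable]: "f \<in> borel_measurable borel" "g \<in> borel_measurable borel" and "0 \<le> v"
  shows "(\<integral>\<^sup>+x. ennreal (v / (exp ((f (x $ 1))\<^sup>2 / 2) * exp ((g (x $ 2))\<^sup>2 / 2))) \<partial>(lborel :: (real^2) measure))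
    = ennreal v * ((\<integral>\<^sup>+t. ennreal (exp (- (f t)\<^sup>2 / 2)) \<partial>lborel) * (\<integral>\<^sup>+t. ennreal (exp (- (g t)\<^sup>2 / 2)) \<partial>lborel))"
proof -
  have "(\<integral>\<^sup>+x. ennreal (v / (exp ((f (x $ 1))\<^sup>2 / 2) * exp ((g (x $ 2))\<^sup>2 / 2))) \<partial>(lborel :: (real^2) measure))
      = (\<integral>\<^sup>+x. ennreal v * ennreal (exp (- (f ((x :: real^2) $ 1))\<^sup>2 / 2) * exp (- (g (x $ 2))\<^sup>2 / 2)) \<partial>lborel)"
    using assms by (intro nn_integral_cong) (simp add: exp_minus field_simps ennreal_mult[symmetric])
  also have "\<dots> = ennreal v * (\<integral>\<^sup>+x. ennreal (exp (- (f ((x :: real^2) $ 1))\<^sup>2 / 2) * exp (- (g (x $ 2))\<^sup>2 / 2)) \<partial>lborel)"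
    by (rule nn_integral_cmult) simp
  also have "\<dots> = ennreal v * ((\<integral>\<^sup>+t. ennreal (exp (- (f t)\<^sup>2 / 2)) \<partial>lborel) * (\<integral>\<^sup>+t. ennreal (exp (- (g t)\<^sup>2 / 2)) \<partial>lborel))"
    by (subst nn_integral_real2_prod) auto
  finally show ?thesis .
qed

lemma nn_integral_inverse_near_weight_le:
  assumes "0 \<le> v" "a1 \<le> b1" "a2 \<le> b2"
  shows "(\<integral>\<^sup>+x. ennreal (v / near_weight a1 b1 a2 b2 x) \<partial>lborel)
    \<le> ennreal (v * ((sqrt (2 * pi) + (b1 - a1)) * (sqrt (2 * pi) + (b2 - a2))))"
proof -
  have "(\<integral>\<^sup>+x. ennreal (v / near_weight a1 b1 a2 b2 x) \<partial>lborel)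
      = ennreal v * ((\<integral>\<^sup>+t. ennreal (exp (- (near_dist a1 b1 t)\<^sup>2 / 2)) \<partial>lborel)
                      * (\<integral>\<^sup>+t. ennreal (exp (- (near_dist a2 b2 t)\<^sup>2 / 2)) \<partial>lborel))"
    unfolding near_weight_def
    using nn_integral_inverse_exp_weight[of "near_dist a1 b1" "near_dist a2 b2"] assms(1) by simp
  also have "\<dots> \<le> ennreal v * (ennreal (sqrt (2 * pi) + (b1 - a1)) * ennreal (sqrt (2 * pi) + (b2 - a2)))"
    using assms by (intro mult_left_mono mult_mono nn_integral_gaussian_near_dist_le) auto
  also have "\<dots> = ennreal (v * ((sqrt (2 * pi) + (b1 - a1)) * (sqrt (2 * pi) + (b2 - a2))))"
    using assms by (simp add: ennreal_mult)
  finally show ?thesis .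
qed

lemma nn_integral_inverse_far_weight_outside_ge:
  assumes "0 \<le> v" "a1 \<le> b1" "a2 \<le> b2" "2 * (b1 - a1) \<le> sqrt (2 * pi)" "2 * (b2 - a2) \<le> sqrt (2 * pi)"
  shows "ennreal (v * ((sqrt (2 * pi) - 2 * (b1 - a1)) * (sqrt (2 * pi) - 2 * (b2 - a2)) - (b1 - a1) * (b2 - a2)))
    \<le> (\<integral>\<^sup>+x\<in>- rect a1 b1 a2 b2. ennreal (v / far_weight a1 b1 a2 b2 x) \<partial>lborel)"
proof -
  let ?w = "far_weight a1 b1 a2 b2" and ?R = "rect a1 b1 a2 b2"
  have "ennreal (v * ((sqrt (2 * pi) - 2 * (b1 - a1)) * (sqrt (2 * pi) - 2 * (b2 - a2))))
      = ennreal v * (ennreal (sqrt (2 * pi) - 2 * (b1 - a1)) * ennreal (sqrt (2 * pi) - 2 * (b2 - a2)))"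
    using assms by (simp add: ennreal_mult)
  also have "\<dots> \<le> ennreal v * ((\<integral>\<^sup>+t. ennreal (exp (- (far_dist a1 b1 t)\<^sup>2 / 2)) \<partial>lborel)
                      * (\<integral>\<^sup>+t. ennreal (exp (- (far_dist a2 b2 t)\<^sup>2 / 2)) \<partial>lborel))"
    using assms by (intro mult_left_mono mult_mono nn_integral_gaussian_far_dist_ge) auto
  also have "\<dots> = (\<integral>\<^sup>+x. ennreal (v / ?w x) \<partial>lborel)"
    unfolding far_weight_def
    using nn_integral_inverse_exp_weight[of "far_dist a1 b1" "far_dist a2 b2"] assms(1) by simp
  also have "\<dots> = (\<integral>\<^sup>+x\<in>?R. ennreal (v / ?w x) \<partial>lborel) + (\<integral>\<^sup>+x\<in>- ?R. ennreal (v / ?w x) \<partial>lborel)"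
    by (subst nn_integral_add[symmetric]) (auto intro!: nn_integral_cong split: split_indicator)
  also have "(\<integral>\<^sup>+x\<in>?R. ennreal (v / ?w x) \<partial>lborel) \<le> (\<integral>\<^sup>+x\<in>?R. ennreal v \<partial>lborel)"
  proof (rule nn_integral_mono)
    fix x
    have "v / ?w x \<le> v"
      using assms(1) far_weight_ge_1[of a1 b1 a2 b2 x] by (simp add: divide_le_eq mult_le_cancel_left1)
    then show "ennreal (v / ?w x) * indicator ?R x \<le> ennreal v * indicator ?R x"
      by (auto intro: ennreal_leI split: split_indicator)
  qed
  also have "\<dots> = ennreal (v * ((b1 - a1) * (b2 - a2)))"
    using assms by (simp add: nn_integral_cmult_indicator emeasure_lborel_rect ennreal_mult)
  finally have "ennreal (v * ((sqrt (2 * pi) - 2 * (b1 - a1)) * (sqrt (2 * pi) - 2 * (b2 - a2))))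
      \<le> ennreal (v * ((b1 - a1) * (b2 - a2))) + (\<integral>\<^sup>+x\<in>- ?R. ennreal (v / ?w x) \<partial>lborel)"
    by (simp add: add_right_mono)
  then have "ennreal (v * ((sqrt (2 * pi) - 2 * (b1 - a1)) * (sqrt (2 * pi) - 2 * (b2 - a2)))
      - v * ((b1 - a1) * (b2 - a2))) \<le> (\<integral>\<^sup>+x\<in>- ?R. ennreal (v / ?w x) \<partial>lborel)"
    using assms by (subst ennreal_minus[symmetric]) (auto simp: ennreal_minus_le_iff add.commute)
  then show ?thesis
    by (simp add: right_diff_distrib)
qed

definition potential_dominators :: "real \<Rightarrow> real \<Rightarrow> real \<Rightarrow> real \<Rightarrow> real \<Rightarrow> ((real^2) \<times> real) set" where
  "potential_dominators a1 b1 a2 b2 v = {(x, u). near_weight a1 b1 a2 b2 x < u * v}"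

definition certain_dominators :: "real \<Rightarrow> real \<Rightarrow> real \<Rightarrow> real \<Rightarrow> real \<Rightarrow> ((real^2) \<times> real) set" where
  "certain_dominators a1 b1 a2 b2 v = {(x, u). x \<notin> rect a1 b1 a2 b2 \<and> far_weight a1 b1 a2 b2 x < u * v}"

lemma sets_potential_dominators [measurable]:
  "potential_dominators a1 b1 a2 b2 v \<in> sets (borel \<Otimes>\<^sub>M borel)"
proof -
  have "potential_dominators a1 b1 a2 b2 v
      = {p\<in>space (borel \<Otimes>\<^sub>M borel). near_weight a1 b1 a2 b2 (fst p) < snd p * v}"
    by (auto simp: potential_dominators_def space_pair_measure)
  also have "\<dots> \<in> sets (borel \<Otimes>\<^sub>M borel)" by measurable
  finally show ?thesis .
qed

lemma sets_certain_dominators [measurable]: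
  "certain_dominators a1 b1 a2 b2 v \<in> sets (borel \<Otimes>\<^sub>M borel)"
proof -
  have "certain_dominators a1 b1 a2 b2 v
      = {p\<in>space (borel \<Otimes>\<^sub>M borel). fst p \<notin> rect a1 b1 a2 b2 \<and> far_weight a1 b1 a2 b2 (fst p) < snd p * v}"
    by (auto simp: certain_dominators_def space_pair_measure)
  also have "\<dots> \<in> sets (borel \<Otimes>\<^sub>M borel)" by measurable
  finally show ?thesis .
qed

lemma certain_dominators_subset:
  assumes "0 \<le> v" "v \<le> v'"
  shows "certain_dominators a1 b1 a2 b2 v \<subseteq> potential_dominators a1 b1 a2 b2 v'"
proof safe
  fix x u assume "(x, u) \<in> certain_dominators a1 b1 a2 b2 v"
  then have far: "far_weight a1 b1 a2 b2 x < u * v"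
    by (simp add: certain_dominators_def)
  then have "0 < u * v"
    using far_weight_ge_1[of a1 b1 a2 b2 x] by linarith
  then have "0 < u"
    using assms(1) by (simp add: zero_less_mult_iff)
  have "near_weight a1 b1 a2 b2 x \<le> far_weight a1 b1 a2 b2 x"
    by (rule near_weight_le_far_weight)
  also have "\<dots> < u * v" by (rule far)
  also have "\<dots> \<le> u * v'"
    using \<open>0 < u\<close> assms(2) by simp
  finally show "(x, u) \<in> potential_dominators a1 b1 a2 b2 v'"
    by (simp add: potential_dominators_def)
qed

lemma emeasure_potential_dominators_le:
  assumes "0 < \<tau>" "0 < v" "v * \<tau> \<le> 1" "a1 \<le> b1" "a2 \<le> b2"
  shows "emeasure (storm_intensity \<tau>) (potential_dominators a1 b1 a2 b2 v)
    \<le> ennreal (v * ((sqrt (2 * pi) + (b1 - a1)) * (sqrt (2 * pi) + (b2 - a2))))"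
proof -
  have "emeasure (storm_intensity \<tau>) (potential_dominators a1 b1 a2 b2 v)
      = (\<integral>\<^sup>+x\<in>UNIV. ennreal (v / near_weight a1 b1 a2 b2 x) \<partial>lborel)"
    using emeasure_storm_intensity_above[OF assms(1-3), of "near_weight a1 b1 a2 b2" UNIV] near_weight_ge_1
    by (simp add: potential_dominators_def)
  then show ?thesis
    using nn_integral_inverse_near_weight_le[of v a1 b1 a2 b2] assms by simp
qed

lemma emeasure_certain_dominators_ge:
  assumes "0 < \<tau>" "0 < v" "v * \<tau> \<le> 1" "a1 \<le> b1" "a2 \<le> b2"
    "2 * (b1 - a1) \<le> sqrt (2 * pi)" "2 * (b2 - a2) \<le> sqrt (2 * pi)"
  shows "ennreal (v * ((sqrt (2 * pi) - 2 * (b1 - a1)) * (sqrt (2 * pi) - 2 * (b2 - a2)) - (b1 - a1) * (b2 - a2)))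
    \<le> emeasure (storm_intensity \<tau>) (certain_dominators a1 b1 a2 b2 v)"
proof -
  have "emeasure (storm_intensity \<tau>) (certain_dominators a1 b1 a2 b2 v)
      = (\<integral>\<^sup>+x\<in>- rect a1 b1 a2 b2. ennreal (v / far_weight a1 b1 a2 b2 x) \<partial>lborel)"
    using emeasure_storm_intensity_above[OF assms(1-3), of "far_weight a1 b1 a2 b2" "- rect a1 b1 a2 b2"]
      far_weight_ge_1
    by (simp add: certain_dominators_def)
  then show ?thesis
    using nn_integral_inverse_far_weight_outside_ge[of v a1 b1 a2 b2] assms by simp
qed

lemma potential_dominatorI:
  assumes "\<xi> \<in> rect a1 b1 a2 b2" "0 < v" "1 < u * v" "u * phi 0 < u' * phi (\<xi> - \<xi>')"
  shows "(\<xi>', u') \<in> potential_dominators a1 b1 a2 b2 v"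
proof -
  define E where "E = exp ((norm (\<xi> - \<xi>'))\<^sup>2 / 2)"
  have "u * E < u'"
    using assms(4) by (simp add: dominates_iff E_def)
  have "near_weight a1 b1 a2 b2 \<xi>' \<le> E"
    using near_weight_le[OF assms(1)] by (simp add: E_def)
  also have "\<dots> < E * (u * v)"
    using assms(3) by (simp add: E_def)
  also have "\<dots> = (u * E) * v"
    by simp
  also have "\<dots> < u' * v"
    using \<open>u * E < u'\<close> assms(2) by (rule mult_strict_right_mono)
  finally show ?thesis
    by (simp add: potential_dominators_def)
qed

lemma certain_dominatorD:
  assumes "(\<xi>', u') \<in> certain_dominators a1 b1 a2 b2 v"
    and "\<xi> \<in> rect a1 b1 a2 b2" "0 \<le> v" "u * v \<le> 1"
  shows "u * phi 0 < u' * phi (\<xi> - \<xi>')" "\<xi>' \<noteq> \<xi>"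
proof -
  define E where "E = exp ((norm (\<xi> - \<xi>'))\<^sup>2 / 2)"
  have far: "far_weight a1 b1 a2 b2 \<xi>' < u' * v" and "\<xi>' \<notin> rect a1 b1 a2 b2"
    using assms(1) by (auto simp: certain_dominators_def)
  then show "\<xi>' \<noteq> \<xi>"
    using assms(2) by auto
  have "(u * E) * v = E * (u * v)"
    by simp
  also have "\<dots> \<le> E"
    using assms(4) by (simp add: E_def mult_left_le)
  also have "\<dots> \<le> far_weight a1 b1 a2 b2 \<xi>'"
    using far_weight_ge[OF assms(2)] by (simp add: E_def)
  also have "\<dots> < u' * v"
    by (rule far)
  finally have "u * E < u'"
    using assms(3) by (rule mult_right_less_imp_less)
  then show "u * phi 0 < u' * phi (\<xi> - \<xi>')"
    by (simp add: dominates_iff E_def)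
qed

definition cell :: "real \<Rightarrow> real \<Rightarrow> real \<Rightarrow> real \<Rightarrow> real \<Rightarrow> nat \<Rightarrow> ((real^2) \<times> real) set" where
  "cell a1 b1 a2 b2 \<Delta> j = rect a1 b1 a2 b2 \<times> recip_band (real j * \<Delta>) ((real j + 1) * \<Delta>)"

lemma mem_cell: "(\<xi>, u) \<in> cell a1 b1 a2 b2 \<Delta> j \<longleftrightarrow>
   \<xi> \<in> rect a1 b1 a2 b2 \<and> 0 < u \<and> real j * \<Delta> \<le> 1 / u \<and> 1 / u < (real j + 1) * \<Delta>"
  by (simp add: cell_def recip_band_def)

lemma sets_cell [measurable]: "cell a1 b1 a2 b2 \<Delta> j \<in> sets (borel \<Otimes>\<^sub>M borel)"
  by (simp add: cell_def)

lemma disjoint_cells: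
  assumes "0 < \<Delta>" "i \<noteq> j"
  shows "cell a1 b1 a2 b2 \<Delta> i \<inter> cell a1 b1 a2 b2 \<Delta> j = {}"
proof (rule ccontr)
  assume "cell a1 b1 a2 b2 \<Delta> i \<inter> cell a1 b1 a2 b2 \<Delta> j \<noteq> {}"
  then obtain \<xi> u where "(\<xi>, u) \<in> cell a1 b1 a2 b2 \<Delta> i" "(\<xi>, u) \<in> cell a1 b1 a2 b2 \<Delta> j"
    by auto
  then have "real i * \<Delta> < (real j + 1) * \<Delta>" "real j * \<Delta> < (real i + 1) * \<Delta>"
    by (auto simp: mem_cell)
  then have "real i < real j + 1" "real j < real i + 1"
    using assms(1) by (simp_all add: mult_less_cancel_right)
  then show False
    using assms(2) by linarith
qed

lemma emeasure_cell:
  assumes "0 < \<tau>" "0 < \<Delta>" "(real j + 1) * \<Delta> * \<tau> \<le> 1" "a1 \<le> b1" "a2 \<le> b2"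
  shows "emeasure (storm_intensity \<tau>) (cell a1 b1 a2 b2 \<Delta> j) = ennreal ((b1 - a1) * (b2 - a2) * \<Delta>)"
  using emeasure_storm_intensity_rect_band[of \<tau> "real j * \<Delta>" "(real j + 1) * \<Delta>" a1 b1 a2 b2] assms
  by (simp add: cell_def algebra_simps)

lemma cell_marks_bounded:
  assumes "0 < \<tau>" "0 < \<Delta>" "real K * \<Delta> = 1 / \<tau>" "j < K"
  shows "(real j + 1) * \<Delta> * \<tau> \<le> 1"
proof -
  have "(real j + 1) * \<Delta> * \<tau> \<le> real K * \<Delta> * \<tau>"
    using assms by (intro mult_right_mono) auto
  also have "\<dots> = 1"
    using assms(1,3) by simp
  finally show ?thesis .
qed

section \<open>Counting visible storms in a rectangle\<close>

lemma alone_in_cellD: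
  assumes "S \<inter> cell a1 b1 a2 b2 \<Delta> j = {(\<xi>, u)}"
  shows "(\<xi>, u) \<in> S" "\<xi> \<in> rect a1 b1 a2 b2" "0 < u" "1 < u * ((real j + 1) * \<Delta>)"
    and "0 < (real j + 1) * \<Delta>"
proof -
  have "(\<xi>, u) \<in> S \<inter> cell a1 b1 a2 b2 \<Delta> j"
    using assms by simp
  then show "(\<xi>, u) \<in> S" "\<xi> \<in> rect a1 b1 a2 b2" and u: "0 < u" "1 < u * ((real j + 1) * \<Delta>)"
    by (auto simp: mem_cell field_simps)
  show "0 < (real j + 1) * \<Delta>"
    by (rule zero_less_mult_pos[of u]) (use u in auto)
qed

lemma visible_if_alone_in_cell:
  assumes alone: "S \<inter> cell a1 b1 a2 b2 \<Delta> j = {(\<xi>, u)}"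
    and clear: "S \<inter> (potential_dominators a1 b1 a2 b2 ((real j + 1) * \<Delta>) - cell a1 b1 a2 b2 \<Delta> j) = {}"
  shows "\<xi> \<in> visible S"
proof -
  note in_cell = alone_in_cellD[OF alone]
  have "\<not> u * phi 0 < u' * phi (\<xi> - \<xi>')" if "(\<xi>', u') \<in> S" "\<xi>' \<noteq> \<xi>" for \<xi>' u'
  proof
    assume "u * phi 0 < u' * phi (\<xi> - \<xi>')"
    then have "(\<xi>', u') \<in> potential_dominators a1 b1 a2 b2 ((real j + 1) * \<Delta>)"
      by (rule potential_dominatorI[OF in_cell(2,5,4)])
    with clear that(1) have "(\<xi>', u') \<in> S \<inter> cell a1 b1 a2 b2 \<Delta> j"
      by blast
    with alone that(2) show False
      by auto
  qed
  then show ?thesis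
    using in_cell(1) by (auto simp: visible_def)
qed

lemma mark_le_if_alone_in_cell:
  assumes alone: "S \<inter> cell a1 b1 a2 b2 \<Delta> j = {(\<xi>, u)}"
    and clear: "S \<inter> (potential_dominators a1 b1 a2 b2 ((real j + 1) * \<Delta>) - cell a1 b1 a2 b2 \<Delta> j) = {}"
    and "(\<xi>, u') \<in> S"
  shows "u' \<le> u"
proof (rule ccontr)
  assume "\<not> u' \<le> u"
  note in_cell = alone_in_cellD[OF alone]
  have "u * ((real j + 1) * \<Delta>) < u' * ((real j + 1) * \<Delta>)"
    by (rule mult_strict_right_mono[OF _ in_cell(5)]) (use \<open>\<not> u' \<le> u\<close> in simp)
  then have "near_weight a1 b1 a2 b2 \<xi> < u' * ((real j + 1) * \<Delta>)"
    using near_weight_eq_1[OF in_cell(2)] in_cell(4) by linarith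
  then have "(\<xi>, u') \<in> potential_dominators a1 b1 a2 b2 ((real j + 1) * \<Delta>)"
    by (simp add: potential_dominators_def)
  with clear assms(3) have "(\<xi>, u') \<in> S \<inter> cell a1 b1 a2 b2 \<Delta> j"
    by blast
  with alone \<open>\<not> u' \<le> u\<close> show False
    by auto
qed

lemma card_le_ecard_visible:
  assumes "0 < \<Delta>" "finite J"
    and cells: "\<And>j. j \<in> J \<Longrightarrow> card (S \<inter> cell a1 b1 a2 b2 \<Delta> j) = 1
      \<and> S \<inter> (potential_dominators a1 b1 a2 b2 ((real j + 1) * \<Delta>) - cell a1 b1 a2 b2 \<Delta> j) = {}"
  shows "of_nat (card J) \<le> ecard (visible S \<inter> rect a1 b1 a2 b2)"
proof -
  have "\<forall>j\<in>J. \<exists>p. S \<inter> cell a1 b1 a2 b2 \<Delta> j = {p}"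
    using cells by (metis card_1_singletonE)
  then obtain pt where pt: "\<And>j. j \<in> J \<Longrightarrow> S \<inter> cell a1 b1 a2 b2 \<Delta> j = {pt j}"
    by metis
  have alone: "S \<inter> cell a1 b1 a2 b2 \<Delta> j = {(fst (pt j), snd (pt j))}"
    and clear: "S \<inter> (potential_dominators a1 b1 a2 b2 ((real j + 1) * \<Delta>) - cell a1 b1 a2 b2 \<Delta> j) = {}"
    if "j \<in> J" for j
    using pt[OF that] cells[OF that] by simp_all
  have inj: "inj_on (fst \<circ> pt) J"
  proof (rule inj_onI)
    fix i j assume ij: "i \<in> J" "j \<in> J" "(fst \<circ> pt) i = (fst \<circ> pt) j"
    have "(fst (pt j), snd (pt i)) \<in> S" "(fst (pt i), snd (pt j)) \<in> S"
      using alone_in_cellD(1)[OF alone] ij by (metis o_apply)+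
    then have "snd (pt i) \<le> snd (pt j)" "snd (pt j) \<le> snd (pt i)"
      using mark_le_if_alone_in_cell[OF alone clear] ij(1,2) by blast+
    then have "pt i \<in> cell a1 b1 a2 b2 \<Delta> i \<inter> cell a1 b1 a2 b2 \<Delta> j"
      using pt[OF ij(1)] pt[OF ij(2)] ij(3) by (auto simp: prod_eq_iff)
    then show "i = j"
      using disjoint_cells[OF assms(1)] by blast
  qed
  have sub: "(fst \<circ> pt) ` J \<subseteq> visible S \<inter> rect a1 b1 a2 b2"
    using visible_if_alone_in_cell[OF alone clear] alone_in_cellD(2)[OF alone] by auto
  show ?thesis
  proof (cases "finite (visible S \<inter> rect a1 b1 a2 b2)")
    case True
    then have "card J \<le> card (visible S \<inter> rect a1 b1 a2 b2)"
      using card_inj_on_le[OF inj sub] by simp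
    then show ?thesis
      using True by (simp add: ecard_def)
  qed (simp add: ecard_def)
qed

lemma bin_index_exists:
  assumes "0 < \<Delta>" "0 \<le> x"
  obtains j :: nat where "real j * \<Delta> \<le> x" "x < (real j + 1) * \<Delta>"
proof
  let ?j = "nat \<lfloor>x / \<Delta>\<rfloor>"
  have "real ?j \<le> x / \<Delta>" "x / \<Delta> < real ?j + 1"
    using assms by (simp_all add: of_nat_nat)
  then show "real ?j * \<Delta> \<le> x" "x < (real ?j + 1) * \<Delta>"
    using assms(1) by (simp_all add: field_simps)
qed

lemma visible_in_clear_cell:
  assumes "0 < \<tau>" "0 < \<Delta>" "real K * \<Delta> = 1 / \<tau>"
    and light: "S \<inter> (rect a1 b1 a2 b2 \<times> {..\<tau>}) = {}"
    and "\<xi> \<in> visible S \<inter> rect a1 b1 a2 b2"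
  obtains u j where "j < K" "(\<xi>, u) \<in> S \<inter> cell a1 b1 a2 b2 \<Delta> j"
    "S \<inter> certain_dominators a1 b1 a2 b2 (real j * \<Delta>) = {}"
proof -
  obtain u where \<xi>: "\<xi> \<in> rect a1 b1 a2 b2" and S: "(\<xi>, u) \<in> S"
    and undominated: "\<And>\<xi>' u'. (\<xi>', u') \<in> S \<Longrightarrow> \<xi>' \<noteq> \<xi> \<Longrightarrow> \<not> u' * phi (\<xi> - \<xi>') > u * phi 0"
    using assms(5) by (auto simp: visible_def)
  have "\<tau> < u"
  proof (rule ccontr)
    assume "\<not> \<tau> < u"
    then have "(\<xi>, u) \<in> S \<inter> (rect a1 b1 a2 b2 \<times> {..\<tau>})"
      using S \<xi> by simp
    with light show False
      by blast
  qed
  then have u: "0 < u" "1 / u < real K * \<Delta>"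
    using assms(1,3) by (simp_all add: frac_less2)
  obtain j where j: "real j * \<Delta> \<le> 1 / u" "1 / u < (real j + 1) * \<Delta>"
    using bin_index_exists[OF assms(2), of "1 / u"] u(1) by auto
  have "real j * \<Delta> < real K * \<Delta>"
    using j(1) u(2) by linarith
  then have "j < K"
    using assms(2) by simp
  moreover have "(\<xi>, u) \<in> S \<inter> cell a1 b1 a2 b2 \<Delta> j"
    using S \<xi> u j by (simp add: mem_cell)
  moreover have "S \<inter> certain_dominators a1 b1 a2 b2 (real j * \<Delta>) = {}"
  proof (rule ccontr)
    assume "S \<inter> certain_dominators a1 b1 a2 b2 (real j * \<Delta>) \<noteq> {}"
    then obtain \<xi>' u' where S': "(\<xi>', u') \<in> S"
      and D: "(\<xi>', u') \<in> certain_dominators a1 b1 a2 b2 (real j * \<Delta>)"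
      by auto
    have "u * (real j * \<Delta>) \<le> 1"
      using j(1) u(1) by (simp add: field_simps)
    with certain_dominatorD[OF D \<xi>] assms(2) have "u * phi 0 < u' * phi (\<xi> - \<xi>')" "\<xi>' \<noteq> \<xi>"
      by simp_all
    then show False
      using undominated[OF S'] by blast
  qed
  ultimately show ?thesis
    using that by blast
qed

lemma ecard_visible_le:
  assumes "0 < \<tau>" "0 < \<Delta>" "real K * \<Delta> = 1 / \<tau>"
    and light: "S \<inter> (rect a1 b1 a2 b2 \<times> {..\<tau>}) = {}"
    and fin: "\<And>j. j < K \<Longrightarrow> finite (S \<inter> cell a1 b1 a2 b2 \<Delta> j)"
  shows "ecard (visible S \<inter> rect a1 b1 a2 b2)
    \<le> (\<Sum>j<K. of_nat (card (S \<inter> cell a1 b1 a2 b2 \<Delta> j))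
               * (if S \<inter> certain_dominators a1 b1 a2 b2 (real j * \<Delta>) = {} then 1 else 0))"
proof -
  let ?Q = "\<lambda>j. S \<inter> cell a1 b1 a2 b2 \<Delta> j"
  define I where "I = {j\<in>{..<K}. S \<inter> certain_dominators a1 b1 a2 b2 (real j * \<Delta>) = {}}"
  have sub: "visible S \<inter> rect a1 b1 a2 b2 \<subseteq> (\<Union>j\<in>I. fst ` ?Q j)"
  proof
    fix \<xi> assume "\<xi> \<in> visible S \<inter> rect a1 b1 a2 b2"
    then obtain u j where "j < K" "(\<xi>, u) \<in> ?Q j" "S \<inter> certain_dominators a1 b1 a2 b2 (real j * \<Delta>) = {}"
      by (rule visible_in_clear_cell[OF assms(1-3) light]) blast
    then show "\<xi> \<in> (\<Union>j\<in>I. fst ` ?Q j)"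
      by (force simp: I_def)
  qed
  have finU: "finite (\<Union>j\<in>I. fst ` ?Q j)"
    using fin by (auto simp: I_def)
  have "ecard (visible S \<inter> rect a1 b1 a2 b2) = of_nat (card (visible S \<inter> rect a1 b1 a2 b2))"
    using finite_subset[OF sub finU] by (simp add: ecard_def)
  also have "card (visible S \<inter> rect a1 b1 a2 b2) \<le> (\<Sum>j\<in>I. card (?Q j))"
  proof -
    have "card (visible S \<inter> rect a1 b1 a2 b2) \<le> card (\<Union>j\<in>I. fst ` ?Q j)"
      using card_mono[OF finU sub] .
    also have "\<dots> \<le> (\<Sum>j\<in>I. card (fst ` ?Q j))"
      by (rule card_UN_le) (simp add: I_def)
    also have "\<dots> \<le> (\<Sum>j\<in>I. card (?Q j))"
      by (intro sum_mono card_image_le) (use fin in \<open>auto simp: I_def\<close>)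
    finally show ?thesis .
  qed
  also have "(\<Sum>j\<in>I. card (?Q j))
      = (\<Sum>j<K. card (?Q j) * (if S \<inter> certain_dominators a1 b1 a2 b2 (real j * \<Delta>) = {} then 1 else 0))"
    by (simp add: I_def sum.inter_filter[symmetric] if_distrib cong: if_cong)
  finally show ?thesis
    by (simp add: of_nat_sum if_distrib cong: if_cong)
qed

section \<open>Expected numbers of visible storms\<close>

locale storm_process =
  fixes M :: "'w measure" and P :: "'w \<Rightarrow> ((real^2) \<times> real) set" and \<tau> :: real
  assumes tau_pos: "0 < \<tau>" and poisson: "poisson_process M P (storm_intensity \<tau>)"
begin

sublocale prob_space M
  using poisson by (simp add: poisson_process_def)

abbreviation "N \<equiv> storm_intensity \<tau>"

lemma AE_finite_points:
  "A \<in> sets N \<Longrightarrow> emeasure N A < \<infinity> \<Longrightarrow> AE \<omega> in M. finite (P \<omega> \<inter> A)"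
  using poisson by (simp add: poisson_process_def)

lemma sets_count_eq:
  "A \<in> sets N \<Longrightarrow> emeasure N A < \<infinity> \<Longrightarrow> {\<omega>\<in>space M. card (P \<omega> \<inter> A) = k} \<in> sets M"
  using poisson by (simp add: poisson_process_def)

lemma prob_count_eq:
  "A \<in> sets N \<Longrightarrow> emeasure N A < \<infinity> \<Longrightarrow>
    prob {\<omega>\<in>space M. card (P \<omega> \<inter> A) = k} = measure N A ^ k / fact k * exp (- measure N A)"
  using poisson by (simp add: poisson_process_def)

lemma measurable_count:
  assumes "A \<in> sets N" "emeasure N A < \<infinity>"
  shows "(\<lambda>\<omega>. card (P \<omega> \<inter> A)) \<in> measurable M (count_space UNIV)"
proof -
  have "(\<lambda>\<omega>. card (P \<omega> \<inter> A)) -` {k} \<inter> space M \<in> sets M" for k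
    using sets_count_eq[OF assms, of k] by (simp add: vimage_def Int_def conj_commute)
  then show ?thesis
    by (auto simp: measurable_count_space_eq2_countable)
qed

lemma AE_no_points_if_null:
  assumes "A \<in> sets N" "emeasure N A = 0"
  shows "AE \<omega> in M. P \<omega> \<inter> A = {}"
proof -
  have "prob {\<omega>\<in>space M. card (P \<omega> \<inter> A) = 0} = 1"
    using prob_count_eq[OF assms(1), of 0] assms(2) by (simp add: measure_def)
  then have "AE \<omega> in M. \<omega> \<in> {\<omega>\<in>space M. card (P \<omega> \<inter> A) = 0}"
    by (rule AE_prob_1)
  moreover have "AE \<omega> in M. finite (P \<omega> \<inter> A)"
    using AE_finite_points[OF assms(1)] assms(2) by simp
  ultimately show ?thesis
    by eventually_elim auto
qed

lemma prob_counts_disjoint: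
  assumes A: "A \<in> sets N" "emeasure N A < \<infinity>" and D: "D \<in> sets N" "emeasure N D < \<infinity>"
    and disj: "A \<inter> D = {}"
  shows "prob {\<omega>\<in>space M. card (P \<omega> \<inter> A) = i \<and> card (P \<omega> \<inter> D) = k}
       = prob {\<omega>\<in>space M. card (P \<omega> \<inter> A) = i} * prob {\<omega>\<in>space M. card (P \<omega> \<inter> D) = k}"
proof -
  define F where "F n = (if n = (0::nat) then A else D)" for n
  define c where "c n = (if n = (0::nat) then i else k)" for n
  have "indep_vars (\<lambda>_. count_space UNIV) (\<lambda>n \<omega>. card (P \<omega> \<inter> F n)) {0, 1}"
  proof -
    have indep: "\<forall>I (F :: nat \<Rightarrow> _ set). finite I \<longrightarrow> (\<forall>n\<in>I. F n \<in> sets N \<and> emeasure N (F n) < \<infinity>)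
        \<longrightarrow> disjoint_family_on F I
        \<longrightarrow> indep_vars (\<lambda>_. count_space UNIV) (\<lambda>n \<omega>. card (P \<omega> \<inter> F n)) I"
      using poisson unfolding poisson_process_def by blast
    have "disjoint_family_on F {0, 1}"
      using disj by (auto simp: disjoint_family_on_def F_def)
    moreover have "\<And>n. n \<in> {0, 1} \<Longrightarrow> F n \<in> sets N \<and> emeasure N (F n) < \<infinity>"
      using A D by (auto simp: F_def)
    ultimately show ?thesis
      using indep[rule_format, of "{0, 1}" F] by simp
  qed
  then have "prob (\<Inter>n\<in>{0,1}. (\<lambda>\<omega>. card (P \<omega> \<inter> F n)) -` {c n} \<inter> space M)
      = (\<Prod>n\<in>{0,1}. prob ((\<lambda>\<omega>. card (P \<omega> \<inter> F n)) -` {c n} \<inter> space M))"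
    by (rule indep_varsD) auto
  moreover have "(\<Inter>n\<in>{0,1}. (\<lambda>\<omega>. card (P \<omega> \<inter> F n)) -` {c n} \<inter> space M)
      = {\<omega>\<in>space M. card (P \<omega> \<inter> A) = i \<and> card (P \<omega> \<inter> D) = k}"
    by (auto simp: F_def c_def)
  moreover have "(\<Prod>n\<in>{0::nat,1}. prob ((\<lambda>\<omega>. card (P \<omega> \<inter> F n)) -` {c n} \<inter> space M))
      = prob {\<omega>\<in>space M. card (P \<omega> \<inter> A) = i} * prob {\<omega>\<in>space M. card (P \<omega> \<inter> D) = k}"
    by (simp add: F_def c_def vimage_def Int_def conj_commute)
  ultimately show ?thesis
    by simp
qed

text \<open>The mean \<open>\<Sum>\<^sub>i i m\<^sup>i e\<^sup>-\<^sup>m / i! = m\<close> of the count in \<open>A\<close> times the probability \<open>e\<^sup>-\<^sup>\<mu>\<close>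
  that the independent count in \<open>D\<close> vanishes.\<close>
lemma nn_integral_count_if_none:
  assumes A: "A \<in> sets N" "emeasure N A < \<infinity>" and D: "D \<in> sets N" "emeasure N D < \<infinity>"
    and disj: "A \<inter> D = {}"
  shows "(\<integral>\<^sup>+\<omega>. of_nat (card (P \<omega> \<inter> A)) * indicator {\<omega>\<in>space M. card (P \<omega> \<inter> D) = 0} \<omega> \<partial>M)
       = ennreal (measure N A * exp (- measure N D))"
proof -
  define m where "m = measure N A"
  define \<mu> where "\<mu> = measure N D"
  define E where "E i = {\<omega>\<in>space M. card (P \<omega> \<inter> A) = i \<and> card (P \<omega> \<inter> D) = 0}" for i
  have E_sets: "E i \<in> sets M" for i
  proof -
    have "E i = {\<omega>\<in>space M. card (P \<omega> \<inter> A) = i} \<inter> {\<omega>\<in>space M. card (P \<omega> \<inter> D) = 0}"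
      by (auto simp: E_def)
    then show ?thesis
      using sets_count_eq[OF A] sets_count_eq[OF D] by auto
  qed
  have terms: "real i * m ^ i / fact i * exp (- m) * exp (- \<mu>) = real i * prob (E i)" for i
    using prob_counts_disjoint[OF A D disj, of i 0] prob_count_eq[OF A, of i] prob_count_eq[OF D, of 0]
    by (simp add: E_def m_def \<mu>_def)
  have sums: "(\<lambda>i. real i * m ^ i / fact i * exp (- m) * exp (- \<mu>)) sums (m * exp (- \<mu>))"
    using sums_mult2[OF sums_poisson_mean[of m], of "exp (- m) * exp (- \<mu>)"]
    by (simp add: mult.assoc exp_minus field_simps)
  have "(\<integral>\<^sup>+\<omega>. of_nat (card (P \<omega> \<inter> A)) * indicator {\<omega>\<in>space M. card (P \<omega> \<inter> D) = 0} \<omega> \<partial>M)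
      = (\<integral>\<^sup>+\<omega>. (\<Sum>i. of_nat i * indicator (E i) \<omega>) \<partial>M)"
  proof (rule nn_integral_cong)
    fix \<omega> assume "\<omega> \<in> space M"
    then have "(\<lambda>i. of_nat i * indicator (E i) \<omega> :: ennreal)
        = (\<lambda>i. if i = card (P \<omega> \<inter> A)
                then of_nat (card (P \<omega> \<inter> A)) * indicator {\<omega>\<in>space M. card (P \<omega> \<inter> D) = 0} \<omega> else 0)"
      by (auto simp: E_def split: split_indicator)
    then show "of_nat (card (P \<omega> \<inter> A)) * indicator {\<omega>\<in>space M. card (P \<omega> \<inter> D) = 0} \<omega>
        = (\<Sum>i. of_nat i * indicator (E i) \<omega> :: ennreal)"
      using sums_unique[OF sums_single[of "card (P \<omega> \<inter> A)"
          "\<lambda>_. of_nat (card (P \<omega> \<inter> A)) * indicator {\<omega>\<in>space M. card (P \<omega> \<inter> D) = 0} \<omega> :: ennreal"]]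
      by simp
  qed
  also have "\<dots> = (\<Sum>i. ennreal (real i * prob (E i)))"
    using E_sets
    by (subst nn_integral_suminf) (auto simp: nn_integral_cmult_indicator emeasure_eq_measure ennreal_mult
        ennreal_of_nat_eq_real_of_nat)
  also have "\<dots> = ennreal (m * exp (- \<mu>))"
    using sums by (simp add: terms[symmetric] suminf_ennreal2 sums_unique[symmetric] sums_summable m_def)
  finally show ?thesis
    by (simp add: m_def \<mu>_def)
qed

lemma cell_measure:
  assumes "0 < \<Delta>" "real K * \<Delta> = 1 / \<tau>" "j < K" "a1 \<le> b1" "a2 \<le> b2"
  shows "cell a1 b1 a2 b2 \<Delta> j \<in> sets N" "emeasure N (cell a1 b1 a2 b2 \<Delta> j) < \<infinity>"
    and "measure N (cell a1 b1 a2 b2 \<Delta> j) = (b1 - a1) * (b2 - a2) * \<Delta>"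
  using emeasure_cell[OF tau_pos assms(1) cell_marks_bounded[OF tau_pos assms(1-3)] assms(4,5)] assms
  by (simp_all add: measure_def)

lemma potential_dominators_measure:
  assumes "0 < \<Delta>" "real K * \<Delta> = 1 / \<tau>" "j < K" "a1 \<le> b1" "a2 \<le> b2"
  defines "D \<equiv> potential_dominators a1 b1 a2 b2 ((real j + 1) * \<Delta>) - cell a1 b1 a2 b2 \<Delta> j"
  shows "D \<in> sets N" "emeasure N D < \<infinity>"
    and "measure N D \<le> (real j + 1) * \<Delta> * ((sqrt (2 * pi) + (b1 - a1)) * (sqrt (2 * pi) + (b2 - a2)))"
proof -
  show "D \<in> sets N"
    by (simp add: D_def)
  have "emeasure N D \<le> emeasure N (potential_dominators a1 b1 a2 b2 ((real j + 1) * \<Delta>))"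
    by (rule emeasure_mono) (auto simp: D_def)
  also have "\<dots> \<le> ennreal ((real j + 1) * \<Delta> * ((sqrt (2 * pi) + (b1 - a1)) * (sqrt (2 * pi) + (b2 - a2))))"
    using assms cell_marks_bounded[OF tau_pos assms(1-3)]
    by (intro emeasure_potential_dominators_le[OF tau_pos]) (auto simp: mult.commute)
  finally have le: "emeasure N D \<le> \<dots>" .
  then show "emeasure N D < \<infinity>"
    by (simp add: le_less_trans)
  show "measure N D \<le> (real j + 1) * \<Delta> * ((sqrt (2 * pi) + (b1 - a1)) * (sqrt (2 * pi) + (b2 - a2)))"
    unfolding measure_def using le assms by (intro enn2real_leI) auto
qed

lemma certain_dominators_measure:
  assumes "0 < \<Delta>" "real K * \<Delta> = 1 / \<tau>" "j < K" "a1 \<le> b1" "a2 \<le> b2"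
  defines "D \<equiv> certain_dominators a1 b1 a2 b2 (real j * \<Delta>)"
  shows "D \<in> sets N" "emeasure N D < \<infinity>"
    and "2 * (b1 - a1) \<le> sqrt (2 * pi) \<Longrightarrow> 2 * (b2 - a2) \<le> sqrt (2 * pi) \<Longrightarrow>
      real j * \<Delta> * ((sqrt (2 * pi) - 2 * (b1 - a1)) * (sqrt (2 * pi) - 2 * (b2 - a2)) - (b1 - a1) * (b2 - a2))
       \<le> measure N D"
proof -
  show "D \<in> sets N"
    by (simp add: D_def)
  have "emeasure N D \<le> emeasure N (potential_dominators a1 b1 a2 b2 ((real j + 1) * \<Delta>))"
    using certain_dominators_subset[of "real j * \<Delta>" "(real j + 1) * \<Delta>"] assms(1)
    by (intro emeasure_mono) (auto simp: D_def)
  also have "\<dots> < \<infinity>"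
    using assms cell_marks_bounded[OF tau_pos assms(1-3)]
      emeasure_potential_dominators_le[OF tau_pos, of "(real j + 1) * \<Delta>" a1 b1 a2 b2]
    by (simp add: mult.commute le_less_trans)
  finally show fin: "emeasure N D < \<infinity>" .
  assume "2 * (b1 - a1) \<le> sqrt (2 * pi)" "2 * (b2 - a2) \<le> sqrt (2 * pi)"
  show "real j * \<Delta> * ((sqrt (2 * pi) - 2 * (b1 - a1)) * (sqrt (2 * pi) - 2 * (b2 - a2)) - (b1 - a1) * (b2 - a2))
       \<le> measure N D"
  proof (cases "j = 0")
    case False
    then have "0 < real j * \<Delta>"
      using assms(1) by simp
    moreover have "real j * \<Delta> * \<tau> \<le> 1"
      using cell_marks_bounded[OF tau_pos assms(1-3)] mult_pos_pos[OF assms(1) tau_pos]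
      by (simp add: algebra_simps)
    ultimately have "ennreal (real j * \<Delta> * ((sqrt (2 * pi) - 2 * (b1 - a1)) * (sqrt (2 * pi) - 2 * (b2 - a2))
        - (b1 - a1) * (b2 - a2))) \<le> emeasure N D"
      unfolding D_def using emeasure_certain_dominators_ge[OF tau_pos] assms(4,5)
        \<open>2 * (b1 - a1) \<le> sqrt (2 * pi)\<close> \<open>2 * (b2 - a2) \<le> sqrt (2 * pi)\<close> by blast
    then show ?thesis
      using fin by (cases "emeasure N D" rule: ennreal_cases) (auto simp: measure_def)
  qed simp
qed

definition alone_in_cell :: "real \<Rightarrow> real \<Rightarrow> real \<Rightarrow> real \<Rightarrow> real \<Rightarrow> nat \<Rightarrow> 'w set" where
  "alone_in_cell a1 b1 a2 b2 \<Delta> j = {\<omega>\<in>space M. card (P \<omega> \<inter> cell a1 b1 a2 b2 \<Delta> j) = 1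
     \<and> card (P \<omega> \<inter> (potential_dominators a1 b1 a2 b2 ((real j + 1) * \<Delta>) - cell a1 b1 a2 b2 \<Delta> j)) = 0}"

lemma prob_alone_in_cell_ge:
  assumes \<Delta>: "0 < \<Delta>" "real K * \<Delta> = 1 / \<tau>" "j < K" and ab: "a1 \<le> b1" "a2 \<le> b2"
  shows "alone_in_cell a1 b1 a2 b2 \<Delta> j \<in> sets M"
    and "(b1 - a1) * (b2 - a2) * \<Delta> * exp (- ((b1 - a1) * (b2 - a2) * \<Delta>))
        * exp (- ((real j + 1) * \<Delta> * ((sqrt (2 * pi) + (b1 - a1)) * (sqrt (2 * pi) + (b2 - a2)))))
      \<le> prob (alone_in_cell a1 b1 a2 b2 \<Delta> j)"
proof -
  let ?Q = "cell a1 b1 a2 b2 \<Delta> j"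
  let ?D = "potential_dominators a1 b1 a2 b2 ((real j + 1) * \<Delta>) - cell a1 b1 a2 b2 \<Delta> j"
  define m where "m = (b1 - a1) * (b2 - a2) * \<Delta>"
  note Q = cell_measure[OF \<Delta> ab] and D = potential_dominators_measure[OF \<Delta> ab]
  have "alone_in_cell a1 b1 a2 b2 \<Delta> j = {\<omega>\<in>space M. card (P \<omega> \<inter> ?Q) = 1} \<inter> {\<omega>\<in>space M. card (P \<omega> \<inter> ?D) = 0}"
    by (auto simp: alone_in_cell_def)
  then show "alone_in_cell a1 b1 a2 b2 \<Delta> j \<in> sets M"
    using sets_count_eq[OF Q(1,2)] sets_count_eq[OF D(1,2)] by auto
  have "prob (alone_in_cell a1 b1 a2 b2 \<Delta> j) = m * exp (- m) * exp (- measure N ?D)"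
    using prob_counts_disjoint[OF Q(1,2) D(1,2), of 1 0] prob_count_eq[OF Q(1,2), of 1]
      prob_count_eq[OF D(1,2), of 0] Q(3)
    by (auto simp: alone_in_cell_def m_def)
  moreover have "exp (- ((real j + 1) * \<Delta> * ((sqrt (2 * pi) + (b1 - a1)) * (sqrt (2 * pi) + (b2 - a2)))))
      \<le> exp (- measure N ?D)"
    using D(3) by simp
  moreover have "0 \<le> m * exp (- m)"
    using \<Delta> ab by (simp add: m_def)
  ultimately show "m * exp (- m)
        * exp (- ((real j + 1) * \<Delta> * ((sqrt (2 * pi) + (b1 - a1)) * (sqrt (2 * pi) + (b2 - a2)))))
      \<le> prob (alone_in_cell a1 b1 a2 b2 \<Delta> j)"
    by (simp add: mult_left_mono)
qed

lemma AE_sum_alone_in_cell_le: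
  assumes \<Delta>: "0 < \<Delta>" "real K * \<Delta> = 1 / \<tau>" and ab: "a1 \<le> b1" "a2 \<le> b2"
  shows "AE \<omega> in M. (\<Sum>j<K. indicator (alone_in_cell a1 b1 a2 b2 \<Delta> j) \<omega>)
    \<le> ecard (visible (P \<omega>) \<inter> rect a1 b1 a2 b2)"
proof -
  let ?D = "\<lambda>j. potential_dominators a1 b1 a2 b2 ((real j + 1) * \<Delta>) - cell a1 b1 a2 b2 \<Delta> j"
  note D = potential_dominators_measure[OF \<Delta> _ ab]
  have "AE \<omega> in M. \<forall>j\<in>{..<K}. finite (P \<omega> \<inter> ?D j)"
    by (rule AE_finite_allI) (use AE_finite_points[OF D(1,2)] in auto)
  then show ?thesis
  proof eventually_elim
    case (elim \<omega>)
    define J where "J = {j\<in>{..<K}. \<omega> \<in> alone_in_cell a1 b1 a2 b2 \<Delta> j}"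
    have "{..<K} \<inter> {j. \<omega> \<in> alone_in_cell a1 b1 a2 b2 \<Delta> j} = J"
      by (auto simp: J_def)
    then have "(\<Sum>j<K. indicator (alone_in_cell a1 b1 a2 b2 \<Delta> j) \<omega> :: ennreal) = of_nat (card J)"
      by (simp add: sum.If_cases indicator_def)
    also have "\<dots> \<le> ecard (visible (P \<omega>) \<inter> rect a1 b1 a2 b2)"
    proof (rule card_le_ecard_visible[OF \<Delta>(1)])
      fix j assume "j \<in> J"
      then have "j < K" "card (P \<omega> \<inter> cell a1 b1 a2 b2 \<Delta> j) = 1" "card (P \<omega> \<inter> ?D j) = 0"
        by (simp_all add: J_def alone_in_cell_def)
      moreover have "finite (P \<omega> \<inter> ?D j)"
        using bspec[OF elim] \<open>j < K\<close> by simp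
      ultimately show "card (P \<omega> \<inter> cell a1 b1 a2 b2 \<Delta> j) = 1 \<and> P \<omega> \<inter> ?D j = {}"
        by simp
    qed (simp add: J_def)
    finally show ?case .
  qed
qed

lemma expected_visible_ge:
  assumes \<Delta>: "0 < \<Delta>" "real K * \<Delta> = 1 / \<tau>" and ab: "a1 \<le> b1" "a2 \<le> b2"
  shows "ennreal (\<Sum>j<K. (b1 - a1) * (b2 - a2) * \<Delta> * exp (- ((b1 - a1) * (b2 - a2) * \<Delta>))
            * exp (- ((real j + 1) * \<Delta> * ((sqrt (2 * pi) + (b1 - a1)) * (sqrt (2 * pi) + (b2 - a2))))))
     \<le> (\<integral>\<^sup>+\<omega>. ecard (visible (P \<omega>) \<inter> rect a1 b1 a2 b2) \<partial>M)"
proof -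
  note alone = prob_alone_in_cell_ge[OF \<Delta> _ ab]
  have "ennreal (\<Sum>j<K. (b1 - a1) * (b2 - a2) * \<Delta> * exp (- ((b1 - a1) * (b2 - a2) * \<Delta>))
            * exp (- ((real j + 1) * \<Delta> * ((sqrt (2 * pi) + (b1 - a1)) * (sqrt (2 * pi) + (b2 - a2))))))
      \<le> ennreal (\<Sum>j<K. prob (alone_in_cell a1 b1 a2 b2 \<Delta> j))"
    using alone(2) by (intro ennreal_leI sum_mono) auto
  also have "\<dots> = (\<Sum>j<K. emeasure M (alone_in_cell a1 b1 a2 b2 \<Delta> j))"
    by (simp add: emeasure_eq_measure sum_ennreal)
  also have "\<dots> = (\<integral>\<^sup>+\<omega>. (\<Sum>j<K. indicator (alone_in_cell a1 b1 a2 b2 \<Delta> j) \<omega>) \<partial>M)"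
    using alone(1) by (subst nn_integral_sum) auto
  also have "\<dots> \<le> (\<integral>\<^sup>+\<omega>. ecard (visible (P \<omega>) \<inter> rect a1 b1 a2 b2) \<partial>M)"
    by (rule nn_integral_mono_AE[OF AE_sum_alone_in_cell_le[OF \<Delta> ab]])
  finally show ?thesis .
qed

lemma borel_measurable_count_if_none:
  assumes "A \<in> sets N" "emeasure N A < \<infinity>" "D \<in> sets N" "emeasure N D < \<infinity>"
  shows "(\<lambda>\<omega>. of_nat (card (P \<omega> \<inter> A)) * indicator {\<omega>\<in>space M. card (P \<omega> \<inter> D) = 0} \<omega> :: ennreal)
    \<in> borel_measurable M"
proof -
  have "(\<lambda>\<omega>. of_nat (card (P \<omega> \<inter> A)) :: ennreal) \<in> borel_measurable M"
    using measurable_count[OF assms(1,2)] by (rule measurable_compose) simp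
  moreover have "{\<omega>\<in>space M. card (P \<omega> \<inter> D) = 0} \<in> sets M"
    using sets_count_eq[OF assms(3,4)] .
  ultimately show ?thesis
    by measurable
qed

lemma AE_ecard_visible_le:
  assumes \<Delta>: "0 < \<Delta>" "real K * \<Delta> = 1 / \<tau>" and ab: "a1 \<le> b1" "a2 \<le> b2"
  shows "AE \<omega> in M. ecard (visible (P \<omega>) \<inter> rect a1 b1 a2 b2)
    \<le> (\<Sum>j<K. of_nat (card (P \<omega> \<inter> cell a1 b1 a2 b2 \<Delta> j))
          * indicator {\<omega>\<in>space M. card (P \<omega> \<inter> certain_dominators a1 b1 a2 b2 (real j * \<Delta>)) = 0} \<omega>)"
proof -
  let ?Q = "cell a1 b1 a2 b2 \<Delta>" and ?D = "\<lambda>j. certain_dominators a1 b1 a2 b2 (real j * \<Delta>)"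
  note Q = cell_measure[OF \<Delta> _ ab] and D = certain_dominators_measure[OF \<Delta> _ ab]
  have "AE \<omega> in M. P \<omega> \<inter> (rect a1 b1 a2 b2 \<times> {..\<tau>}) = {}"
    by (rule AE_no_points_if_null) (simp_all add: emeasure_storm_intensity_small_marks tau_pos)
  moreover have "AE \<omega> in M. \<forall>j\<in>{..<K}. finite (P \<omega> \<inter> ?Q j) \<and> finite (P \<omega> \<inter> ?D j)"
    by (rule AE_finite_allI) (use AE_finite_points[OF Q(1,2)] AE_finite_points[OF D(1,2)] in \<open>auto intro: AE_conjI\<close>)
  ultimately show ?thesis
    using AE_space
  proof eventually_elim
    case (elim \<omega>)
    have "ecard (visible (P \<omega>) \<inter> rect a1 b1 a2 b2)
        \<le> (\<Sum>j<K. of_nat (card (P \<omega> \<inter> ?Q j)) * (if P \<omega> \<inter> ?D j = {} then 1 else 0))"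
    proof (rule ecard_visible_le[OF tau_pos \<Delta>])
      show "P \<omega> \<inter> (rect a1 b1 a2 b2 \<times> {..\<tau>}) = {}"
        using elim(1) .
      show "finite (P \<omega> \<inter> ?Q j)" if "j < K" for j
        using conjunct1[OF bspec[OF elim(2)]] that by simp
    qed
    also have "\<dots> = (\<Sum>j<K. of_nat (card (P \<omega> \<inter> ?Q j))
        * indicator {\<omega>\<in>space M. card (P \<omega> \<inter> ?D j) = 0} \<omega>)"
      using elim by (intro sum.cong) (auto simp: indicator_def)
    finally show ?case .
  qed
qed

lemma expected_visible_le:
  assumes \<Delta>: "0 < \<Delta>" "real K * \<Delta> = 1 / \<tau>" and ab: "a1 \<le> b1" "a2 \<le> b2"
    and small: "2 * (b1 - a1) \<le> sqrt (2 * pi)" "2 * (b2 - a2) \<le> sqrt (2 * pi)"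
  shows "(\<integral>\<^sup>+\<omega>. ecard (visible (P \<omega>) \<inter> rect a1 b1 a2 b2) \<partial>M)
     \<le> ennreal (\<Sum>j<K. (b1 - a1) * (b2 - a2) * \<Delta>
            * exp (- (real j * \<Delta> * ((sqrt (2 * pi) - 2 * (b1 - a1)) * (sqrt (2 * pi) - 2 * (b2 - a2))
                                     - (b1 - a1) * (b2 - a2)))))"
proof -
  let ?Q = "cell a1 b1 a2 b2 \<Delta>" and ?D = "\<lambda>j. certain_dominators a1 b1 a2 b2 (real j * \<Delta>)"
  let ?none = "\<lambda>j. {\<omega>\<in>space M. card (P \<omega> \<inter> ?D j) = 0}"
  define m where "m = (b1 - a1) * (b2 - a2) * \<Delta>"
  define C where "C = (sqrt (2 * pi) - 2 * (b1 - a1)) * (sqrt (2 * pi) - 2 * (b2 - a2)) - (b1 - a1) * (b2 - a2)"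
  note Q = cell_measure[OF \<Delta> _ ab] and D = certain_dominators_measure[OF \<Delta> _ ab]
  have disj: "?Q j \<inter> ?D j = {}" for j
    by (auto simp: certain_dominators_def cell_def)
  have "(\<integral>\<^sup>+\<omega>. ecard (visible (P \<omega>) \<inter> rect a1 b1 a2 b2) \<partial>M)
      \<le> (\<integral>\<^sup>+\<omega>. (\<Sum>j<K. of_nat (card (P \<omega> \<inter> ?Q j)) * indicator (?none j) \<omega>) \<partial>M)"
    by (rule nn_integral_mono_AE[OF AE_ecard_visible_le[OF \<Delta> ab]])
  also have "\<dots> = (\<Sum>j<K. (\<integral>\<^sup>+\<omega>. of_nat (card (P \<omega> \<inter> ?Q j)) * indicator (?none j) \<omega> \<partial>M))"
    using borel_measurable_count_if_none[OF Q(1,2) D(1,2)] by (subst nn_integral_sum) auto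
  also have "\<dots> = (\<Sum>j<K. ennreal (m * exp (- measure N (?D j))))"
    by (intro sum.cong refl) (simp add: nn_integral_count_if_none[OF Q(1,2) D(1,2) disj] Q(3) m_def)
  also have "\<dots> \<le> (\<Sum>j<K. ennreal (m * exp (- (real j * \<Delta> * C))))"
    using D(3) small \<Delta> ab by (intro sum_mono ennreal_leI mult_left_mono) (auto simp: C_def m_def)
  also have "\<dots> = ennreal (\<Sum>j<K. m * exp (- (real j * \<Delta> * C)))"
    using \<Delta> ab by (intro sum_ennreal) (simp add: m_def)
  finally show ?thesis
    by (simp add: m_def C_def)
qed

end

section \<open>Local averages of a continuous density\<close>

definition square :: "real^2 \<Rightarrow> real \<Rightarrow> (real^2) set" where
  "square \<xi>0 s = rect (\<xi>0 $ 1 - s / 2) (\<xi>0 $ 1 + s / 2) (\<xi>0 $ 2 - s / 2) (\<xi>0 $ 2 + s / 2)"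

lemma sets_square [measurable]: "square \<xi>0 s \<in> sets borel"
  by (simp add: square_def)

lemma emeasure_lborel_square: "0 \<le> s \<Longrightarrow> emeasure lborel (square \<xi>0 s) = ennreal (s * s)"
  unfolding square_def by (subst emeasure_lborel_rect) auto

lemma square_subset_ball:
  assumes "0 < s"
  shows "square \<xi>0 s \<subseteq> ball \<xi>0 s"
proof
  fix \<xi> assume "\<xi> \<in> square \<xi>0 s"
  then have "\<bar>\<xi> $ 1 - \<xi>0 $ 1\<bar> \<le> s / 2" "\<bar>\<xi> $ 2 - \<xi>0 $ 2\<bar> \<le> s / 2"
    unfolding square_def rect_def abs_le_iff by auto
  then have "(\<xi> $ 1 - \<xi>0 $ 1)\<^sup>2 \<le> (s / 2)\<^sup>2" "(\<xi> $ 2 - \<xi>0 $ 2)\<^sup>2 \<le> (s / 2)\<^sup>2"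
    using assms by (simp_all add: abs_le_square_iff[symmetric])
  then have "(dist \<xi>0 \<xi>)\<^sup>2 \<le> (s / 2)\<^sup>2 + (s / 2)\<^sup>2"
    by (simp add: dist_norm norm_real2_sq power2_commute[of "\<xi>0 $ _"])
  also have "\<dots> < s\<^sup>2"
    using assms by (simp add: power2_eq_square)
  finally have "(dist \<xi>0 \<xi>)\<^sup>2 < s\<^sup>2" .
  then show "\<xi> \<in> ball \<xi>0 s"
    using assms by (simp add: power_less_imp_less_base)
qed

lemma eventually_in_square:
  assumes "eventually P (nhds \<xi>0)"
  shows "eventually (\<lambda>s. \<forall>\<xi>\<in>square \<xi>0 s. P \<xi>) (at_right 0)"
proof -
  obtain \<delta> where "0 < \<delta>" and \<delta>: "\<And>\<xi>. dist \<xi> \<xi>0 < \<delta> \<Longrightarrow> P \<xi>"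
    using assms by (auto simp: eventually_nhds_metric dist_commute)
  have "\<forall>\<xi>\<in>square \<xi>0 s. P \<xi>" if "0 < s" "s < \<delta>" for s
    using square_subset_ball[OF that(1)] that(2) \<delta> by (force simp: dist_commute)
  then show ?thesis
    using \<open>0 < \<delta>\<close> by (auto simp: eventually_at_right_field)
qed

lemma nn_integral_square_le:
  assumes "0 \<le> s" "0 \<le> c" "\<forall>\<xi>\<in>square \<xi>0 s. \<rho> \<xi> \<le> c"
  shows "(\<integral>\<^sup>+\<xi>\<in>square \<xi>0 s. ennreal (\<rho> \<xi>) \<partial>lborel) \<le> ennreal (s * s * c)"
proof -
  have "(\<integral>\<^sup>+\<xi>\<in>square \<xi>0 s. ennreal (\<rho> \<xi>) \<partial>lborel) \<le> (\<integral>\<^sup>+\<xi>\<in>square \<xi>0 s. ennreal c \<partial>lborel)"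
    using assms(3) by (intro nn_integral_mono) (auto intro: ennreal_leI split: split_indicator)
  also have "\<dots> = ennreal (s * s * c)"
    using assms by (simp add: nn_integral_cmult_indicator emeasure_lborel_square ennreal_mult[symmetric] mult.commute)
  finally show ?thesis .
qed

lemma nn_integral_square_ge:
  assumes "0 \<le> s" "0 \<le> c" "\<forall>\<xi>\<in>square \<xi>0 s. c \<le> \<rho> \<xi>"
  shows "ennreal (s * s * c) \<le> (\<integral>\<^sup>+\<xi>\<in>square \<xi>0 s. ennreal (\<rho> \<xi>) \<partial>lborel)"
proof -
  have "ennreal (s * s * c) = (\<integral>\<^sup>+\<xi>\<in>square \<xi>0 s. ennreal c \<partial>lborel)"
    using assms by (simp add: nn_integral_cmult_indicator emeasure_lborel_square ennreal_mult[symmetric] mult.commute)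
  also have "\<dots> \<le> (\<integral>\<^sup>+\<xi>\<in>square \<xi>0 s. ennreal (\<rho> \<xi>) \<partial>lborel)"
    using assms(3) by (intro nn_integral_mono) (auto intro: ennreal_leI split: split_indicator)
  finally show ?thesis .
qed

lemma le_of_square_integral_lower_bounds:
  assumes cont: "isCont \<rho> \<xi>0"
    and lower: "\<forall>\<^sub>F s in at_right 0. ennreal (s * s * f s) \<le> (\<integral>\<^sup>+\<xi>\<in>square \<xi>0 s. ennreal (\<rho> \<xi>) \<partial>lborel)"
    and lim: "(f \<longlongrightarrow> l) (at_right 0)" and "0 < l"
  shows "l \<le> \<rho> \<xi>0"
proof (rule ccontr)
  assume "\<not> l \<le> \<rho> \<xi>0"
  define c where "c = max ((\<rho> \<xi>0 + l) / 2) (l / 2)"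
  have c: "0 < c" "c < l" "\<rho> \<xi>0 < c"
    using \<open>0 < l\<close> \<open>\<not> l \<le> \<rho> \<xi>0\<close> by (auto simp: c_def less_max_iff_disj max_less_iff_conj)
  have near: "eventually (\<lambda>\<xi>. \<rho> \<xi> < c) (nhds \<xi>0)"
    using cont c(3) by (auto simp: isCont_def tendsto_at_iff_tendsto_nhds intro: order_tendstoD)
  have "\<forall>\<^sub>F s in at_right 0. 0 < s \<and> c < f s \<and> (\<forall>\<xi>\<in>square \<xi>0 s. \<rho> \<xi> < c)
      \<and> ennreal (s * s * f s) \<le> (\<integral>\<^sup>+\<xi>\<in>square \<xi>0 s. ennreal (\<rho> \<xi>) \<partial>lborel)"
    using eventually_at_right_less[of 0] order_tendstoD(1)[OF lim c(2)] eventually_in_square[OF near] lower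
    by eventually_elim auto
  then obtain s where s: "0 < s" "c < f s" "\<forall>\<xi>\<in>square \<xi>0 s. \<rho> \<xi> < c"
    and le: "ennreal (s * s * f s) \<le> (\<integral>\<^sup>+\<xi>\<in>square \<xi>0 s. ennreal (\<rho> \<xi>) \<partial>lborel)"
    using eventually_happens[of _ "at_right (0::real)"] by force
  have "(\<integral>\<^sup>+\<xi>\<in>square \<xi>0 s. ennreal (\<rho> \<xi>) \<partial>lborel) \<le> ennreal (s * s * c)"
    using s c by (intro nn_integral_square_le) auto
  also have "\<dots> < ennreal (s * s * f s)"
    using s c by (intro ennreal_lessI) auto
  finally show False
    using le by simp
qed

lemma ge_of_square_integral_upper_bounds:
  assumes cont: "isCont \<rho> \<xi>0"
    and upper: "\<forall>\<^sub>F s in at_right 0. (\<integral>\<^sup>+\<xi>\<in>square \<xi>0 s. ennreal (\<rho> \<xi>) \<partial>lborel) \<le> ennreal (s * s * f s)"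
    and lim: "(f \<longlongrightarrow> l) (at_right 0)" and "0 \<le> l"
  shows "\<rho> \<xi>0 \<le> l"
proof (rule ccontr)
  assume "\<not> \<rho> \<xi>0 \<le> l"
  define c where "c = (\<rho> \<xi>0 + l) / 2"
  have c: "0 < c" "l < c" "c < \<rho> \<xi>0"
    using \<open>0 \<le> l\<close> \<open>\<not> \<rho> \<xi>0 \<le> l\<close> by (auto simp: c_def)
  have near: "eventually (\<lambda>\<xi>. c < \<rho> \<xi>) (nhds \<xi>0)"
    using cont c(3) by (auto simp: isCont_def tendsto_at_iff_tendsto_nhds intro: order_tendstoD)
  have "\<forall>\<^sub>F s in at_right 0. 0 < s \<and> f s < c \<and> (\<forall>\<xi>\<in>square \<xi>0 s. c < \<rho> \<xi>)
      \<and> (\<integral>\<^sup>+\<xi>\<in>square \<xi>0 s. ennreal (\<rho> \<xi>) \<partial>lborel) \<le> ennreal (s * s * f s)"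
    using eventually_at_right_less[of 0] order_tendstoD(2)[OF lim c(2)] eventually_in_square[OF near] upper
    by eventually_elim auto
  then obtain s where s: "0 < s" "f s < c" "\<forall>\<xi>\<in>square \<xi>0 s. c < \<rho> \<xi>"
    and le: "(\<integral>\<^sup>+\<xi>\<in>square \<xi>0 s. ennreal (\<rho> \<xi>) \<partial>lborel) \<le> ennreal (s * s * f s)"
    using eventually_happens[of _ "at_right (0::real)"] by force
  have "ennreal (s * s * f s) < ennreal (s * s * c)"
    using s c by (intro ennreal_lessI) auto
  also have "\<dots> \<le> (\<integral>\<^sup>+\<xi>\<in>square \<xi>0 s. ennreal (\<rho> \<xi>) \<partial>lborel)"
    using s c by (intro nn_integral_square_ge) (auto intro: less_imp_le)
  finally show False
    using le by simp
qed

section \<open>The intensity of visible storm centres\<close>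

lemma sum_exp_riemann:
  assumes "0 < \<Delta>" "real K * \<Delta> = 1 / \<tau>"
  shows "(\<Sum>j<K. \<Delta> * exp (- (real j * \<Delta> * (2 * pi))))
      = (1 - exp (- (2 * pi) / \<tau>)) * (\<Delta> / (1 - exp (- (2 * pi) * \<Delta>)))"
    and "(\<Sum>j<K. \<Delta> * exp (- ((real j + 1) * \<Delta> * (2 * pi))))
      = exp (- (2 * pi) * \<Delta>) * ((1 - exp (- (2 * pi) / \<tau>)) * (\<Delta> / (1 - exp (- (2 * pi) * \<Delta>))))"
proof -
  have "real K * (\<Delta> * (2 * pi)) = (real K * \<Delta>) * (2 * pi)"
    by (rule mult.assoc[symmetric])
  also have "\<dots> = 2 * pi / \<tau>"
    using assms(2) by simp
  finally have K\<Delta>: "real K * (\<Delta> * (2 * pi)) = 2 * pi / \<tau>" .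
  have "(\<Sum>j<K. \<Delta> * exp (- (real j * \<Delta> * (2 * pi)))) = \<Delta> * (\<Sum>j<K. exp (- (real j * (\<Delta> * (2 * pi)))))"
    by (simp add: sum_distrib_left mult.assoc)
  also have "\<dots> = \<Delta> * ((1 - exp (- (real K * (\<Delta> * (2 * pi))))) / (1 - exp (- (\<Delta> * (2 * pi)))))"
    using assms(1) by (subst sum_exp_geometric) auto
  also have "\<dots> = (1 - exp (- (2 * pi) / \<tau>)) * (\<Delta> / (1 - exp (- (2 * pi) * \<Delta>)))"
    unfolding K\<Delta> by (simp add: mult.commute)
  finally show sum: "(\<Sum>j<K. \<Delta> * exp (- (real j * \<Delta> * (2 * pi))))
      = (1 - exp (- (2 * pi) / \<tau>)) * (\<Delta> / (1 - exp (- (2 * pi) * \<Delta>)))" .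
  have "(\<Sum>j<K. \<Delta> * exp (- ((real j + 1) * \<Delta> * (2 * pi))))
      = (\<Sum>j<K. exp (- (2 * pi) * \<Delta>) * (\<Delta> * exp (- (real j * \<Delta> * (2 * pi)))))"
    by (intro sum.cong refl) (simp add: exp_add[symmetric] algebra_simps)
  also have "\<dots> = exp (- (2 * pi) * \<Delta>) * ((1 - exp (- (2 * pi) / \<tau>)) * (\<Delta> / (1 - exp (- (2 * pi) * \<Delta>))))"
    by (simp only: sum_distrib_left[symmetric, of "exp (- (2 * pi) * \<Delta>)"] sum)
  finally show "(\<Sum>j<K. \<Delta> * exp (- ((real j + 1) * \<Delta> * (2 * pi))))
      = exp (- (2 * pi) * \<Delta>) * ((1 - exp (- (2 * pi) / \<tau>)) * (\<Delta> / (1 - exp (- (2 * pi) * \<Delta>))))" .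
qed

lemma tendsto_riemann_sums:
  assumes \<Delta>: "filterlim \<Delta> (at_right 0) F"
  shows "((\<lambda>k. c * (\<Delta> k / (1 - exp (- (2 * pi) * \<Delta> k)))) \<longlongrightarrow> c / (2 * pi)) F"
    and "((\<lambda>k. exp (- (2 * pi) * \<Delta> k) * (c * (\<Delta> k / (1 - exp (- (2 * pi) * \<Delta> k))))) \<longlongrightarrow> c / (2 * pi)) F"
proof -
  have "((\<lambda>x::real. x / (1 - exp (- (2 * pi) * x))) \<longlongrightarrow> inverse pi / 2) (at_right 0)"
    by real_asymp
  then have lim: "((\<lambda>x::real. x / (1 - exp (- (2 * pi) * x))) \<longlongrightarrow> 1 / (2 * pi)) (at_right 0)"
    by (simp add: field_simps)
  show U: "((\<lambda>k. c * (\<Delta> k / (1 - exp (- (2 * pi) * \<Delta> k)))) \<longlongrightarrow> c / (2 * pi)) F"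
    using tendsto_mult_left[OF filterlim_compose[OF lim \<Delta>], of c] by simp
  have exp_lim: "((\<lambda>k. exp (- (2 * pi) * \<Delta> k)) \<longlongrightarrow> exp (- (2 * pi) * 0)) F"
    using \<Delta> by (intro tendsto_intros) (simp add: filterlim_at)
  show "((\<lambda>k. exp (- (2 * pi) * \<Delta> k) * (c * (\<Delta> k / (1 - exp (- (2 * pi) * \<Delta> k))))) \<longlongrightarrow> c / (2 * pi)) F"
    using tendsto_mult[OF exp_lim U] by simp
qed

context storm_process
begin

lemma visible_intensity_ge:
  assumes intensity: "\<forall>B\<in>sets lborel.
      (\<integral>\<^sup>+\<omega>. ecard (visible (P \<omega>) \<inter> B) \<partial>M) = (\<integral>\<^sup>+\<xi>\<in>B. ennreal (\<rho> \<xi>) \<partial>lborel)"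
    and cont: "isCont \<rho> \<xi>0" and \<Delta>: "0 < \<Delta>" "real K * \<Delta> = 1 / \<tau>"
  shows "(\<Sum>j<K. \<Delta> * exp (- ((real j + 1) * \<Delta> * (2 * pi)))) \<le> \<rho> \<xi>0"
proof -
  have square: "(\<integral>\<^sup>+\<omega>. ecard (visible (P \<omega>) \<inter> square \<xi>0 s) \<partial>M) = (\<integral>\<^sup>+\<xi>\<in>square \<xi>0 s. ennreal (\<rho> \<xi>) \<partial>lborel)" for s
    using intensity by simp
  have sqrt_sq: "sqrt (2 * pi) * sqrt (2 * pi) = 2 * pi"
    by simp
  have "K \<noteq> 0"
    using \<Delta>(2) tau_pos by (cases "K = 0") auto
  define lower where "lower s = (\<Sum>j<K. \<Delta> * exp (- (s * s * \<Delta>))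
      * exp (- ((real j + 1) * \<Delta> * ((sqrt (2 * pi) + s) * (sqrt (2 * pi) + s)))))" for s
  show ?thesis
  proof (rule le_of_square_integral_lower_bounds[OF cont])
    show "\<forall>\<^sub>F s in at_right 0. ennreal (s * s * lower s) \<le> (\<integral>\<^sup>+\<xi>\<in>square \<xi>0 s. ennreal (\<rho> \<xi>) \<partial>lborel)"
      using eventually_at_right_less[of 0]
    proof eventually_elim
      case (elim s)
      have "ennreal (s * s * lower s) \<le> (\<integral>\<^sup>+\<omega>. ecard (visible (P \<omega>) \<inter> square \<xi>0 s) \<partial>M)"
        using expected_visible_ge[OF \<Delta>, of "\<xi>0 $ 1 - s / 2" "\<xi>0 $ 1 + s / 2" "\<xi>0 $ 2 - s / 2" "\<xi>0 $ 2 + s / 2"] elim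
        by (simp add: square_def lower_def sum_distrib_left mult.assoc)
      then show ?case
        by (simp only: square)
    qed
    have "(lower \<longlongrightarrow> (\<Sum>j<K. \<Delta> * exp (- (0 * 0 * \<Delta>))
        * exp (- ((real j + 1) * \<Delta> * ((sqrt (2 * pi) + 0) * (sqrt (2 * pi) + 0)))))) (at_right 0)"
      unfolding lower_def by (intro tendsto_intros)
    then show "(lower \<longlongrightarrow> (\<Sum>j<K. \<Delta> * exp (- ((real j + 1) * \<Delta> * (2 * pi))))) (at_right 0)"
      by (simp only: sqrt_sq add_0_right mult_zero_left minus_zero exp_zero mult_1_right)
    show "0 < (\<Sum>j<K. \<Delta> * exp (- ((real j + 1) * \<Delta> * (2 * pi))))"
      using \<open>K \<noteq> 0\<close> \<Delta> by (intro sum_pos) auto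
  qed
qed

lemma visible_intensity_le:
  assumes intensity: "\<forall>B\<in>sets lborel.
      (\<integral>\<^sup>+\<omega>. ecard (visible (P \<omega>) \<inter> B) \<partial>M) = (\<integral>\<^sup>+\<xi>\<in>B. ennreal (\<rho> \<xi>) \<partial>lborel)"
    and cont: "isCont \<rho> \<xi>0" and \<Delta>: "0 < \<Delta>" "real K * \<Delta> = 1 / \<tau>"
  shows "\<rho> \<xi>0 \<le> (\<Sum>j<K. \<Delta> * exp (- (real j * \<Delta> * (2 * pi))))"
proof -
  have square: "(\<integral>\<^sup>+\<omega>. ecard (visible (P \<omega>) \<inter> square \<xi>0 s) \<partial>M) = (\<integral>\<^sup>+\<xi>\<in>square \<xi>0 s. ennreal (\<rho> \<xi>) \<partial>lborel)" for s
    using intensity by simp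
  have sqrt_sq: "sqrt (2 * pi) * sqrt (2 * pi) = 2 * pi"
    by simp
  define upper where "upper s = (\<Sum>j<K. \<Delta>
      * exp (- (real j * \<Delta> * ((sqrt (2 * pi) - 2 * s) * (sqrt (2 * pi) - 2 * s) - s * s))))" for s
  show ?thesis
  proof (rule ge_of_square_integral_upper_bounds[OF cont])
    have "2 \<le> sqrt (2 * pi)"
      using pi_gt3 by (simp add: real_le_rsqrt)
    then have "\<forall>\<^sub>F s in at_right 0. 0 < s \<and> 2 * s \<le> sqrt (2 * pi)"
      by (auto simp: eventually_at_right_field intro!: exI[of _ 1])
    then show "\<forall>\<^sub>F s in at_right 0. (\<integral>\<^sup>+\<xi>\<in>square \<xi>0 s. ennreal (\<rho> \<xi>) \<partial>lborel) \<le> ennreal (s * s * upper s)"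
    proof eventually_elim
      case (elim s)
      have "(\<integral>\<^sup>+\<omega>. ecard (visible (P \<omega>) \<inter> square \<xi>0 s) \<partial>M) \<le> ennreal (s * s * upper s)"
        using expected_visible_le[OF \<Delta>, of "\<xi>0 $ 1 - s / 2" "\<xi>0 $ 1 + s / 2" "\<xi>0 $ 2 - s / 2" "\<xi>0 $ 2 + s / 2"] elim
        by (simp add: square_def upper_def sum_distrib_left mult.assoc)
      then show ?case
        by (simp only: square)
    qed
    have "(upper \<longlongrightarrow> (\<Sum>j<K. \<Delta>
        * exp (- (real j * \<Delta> * ((sqrt (2 * pi) - 2 * 0) * (sqrt (2 * pi) - 2 * 0) - 0 * 0))))) (at_right 0)"
      unfolding upper_def by (intro tendsto_intros)
    then show "(upper \<longlongrightarrow> (\<Sum>j<K. \<Delta> * exp (- (real j * \<Delta> * (2 * pi))))) (at_right 0)"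
      by (simp only: sqrt_sq diff_0_right mult_zero_left mult_zero_right)
    show "0 \<le> (\<Sum>j<K. \<Delta> * exp (- (real j * \<Delta> * (2 * pi))))"
      using \<Delta> by (intro sum_nonneg) auto
  qed
qed

lemma visible_intensity_eq:
  assumes intensity: "\<forall>B\<in>sets lborel.
      (\<integral>\<^sup>+\<omega>. ecard (visible (P \<omega>) \<inter> B) \<partial>M) = (\<integral>\<^sup>+\<xi>\<in>B. ennreal (\<rho> \<xi>) \<partial>lborel)"
    and cont: "isCont \<rho> \<xi>0"
  shows "\<rho> \<xi>0 = (1 - exp (- (2 * pi) / \<tau>)) / (2 * pi)"
proof -
  define \<Delta> where "\<Delta> K = 1 / (\<tau> * real K)" for K :: nat
  define c where "c = 1 - exp (- (2 * pi) / \<tau>)"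
  have \<Delta>: "0 < \<Delta> K" "real K * \<Delta> K = 1 / \<tau>" if "0 < K" for K
    using that tau_pos by (simp_all add: \<Delta>_def)
  have "filterlim \<Delta> (at_right 0) sequentially"
  proof (rule tendsto_imp_filterlim_at_right)
    show "(\<Delta> \<longlongrightarrow> 0) sequentially"
      unfolding \<Delta>_def using tendsto_mult[OF tendsto_const[of "1 / \<tau>"] lim_inverse_n'] by simp
    show "\<forall>\<^sub>F K in sequentially. 0 < \<Delta> K"
      using \<Delta>(1) by (auto simp: eventually_sequentially intro!: exI[of _ 1])
  qed
  note lim = tendsto_riemann_sums[OF this, of c]
  have "\<forall>\<^sub>F K in sequentially. \<rho> \<xi>0 \<le> c * (\<Delta> K / (1 - exp (- (2 * pi) * \<Delta> K)))"
    using visible_intensity_le[OF intensity cont \<Delta>] sum_exp_riemann(1)[OF \<Delta>]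
    by (auto simp: c_def eventually_sequentially intro!: exI[of _ 1])
  moreover have "\<forall>\<^sub>F K in sequentially. exp (- (2 * pi) * \<Delta> K) * (c * (\<Delta> K / (1 - exp (- (2 * pi) * \<Delta> K)))) \<le> \<rho> \<xi>0"
    using visible_intensity_ge[OF intensity cont \<Delta>] sum_exp_riemann(2)[OF \<Delta>]
    by (auto simp: c_def eventually_sequentially intro!: exI[of _ 1])
  ultimately show ?thesis
    using tendsto_lowerbound[OF lim(1)] tendsto_upperbound[OF lim(2)] by (auto simp: c_def intro: antisym)
qed

end

lemma integral_phi_translate: "(\<integral>\<xi>'. phi (\<xi> - \<xi>') \<partial>lborel) = 1"
proof -
  have "(\<integral>\<^sup>+\<xi>'. ennreal (phi (\<xi> - \<xi>')) \<partial>lborel)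
      = ennreal (1 / (2 * pi)) * (\<integral>\<^sup>+\<xi>'. ennreal (exp (- ((\<xi>' :: real^2) $ 1 - \<xi> $ 1)\<^sup>2 / 2)
          * exp (- (\<xi>' $ 2 - \<xi> $ 2)\<^sup>2 / 2)) \<partial>lborel)"
    by (subst nn_integral_cmult[symmetric])
      (auto intro!: nn_integral_cong simp: phi_def norm_real2_sq exp_add[symmetric] power2_commute
        ennreal_mult[symmetric] field_simps)
  also have "\<dots> = ennreal (1 / (2 * pi)) * (ennreal (sqrt (2 * pi)) * ennreal (sqrt (2 * pi)))"
    using nn_integral_gaussian[of "\<xi> $ 1"] nn_integral_gaussian[of "\<xi> $ 2"]
    by (subst nn_integral_real2_prod) auto
  also have "\<dots> = 1"
    by (simp add: ennreal_mult[symmetric])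
  finally have "(\<integral>\<^sup>+\<xi>'. ennreal (phi (\<xi> - \<xi>')) \<partial>lborel) = ennreal 1"
    by simp
  moreover have "(\<lambda>\<xi>'. phi (\<xi> - \<xi>')) \<in> borel_measurable lborel"
    unfolding phi_def by measurable
  moreover have "AE \<xi>' in lborel. 0 \<le> phi (\<xi> - \<xi>')"
    by (simp add: phi_def)
  ultimately show ?thesis
    using nn_integral_eq_integrable[of "\<lambda>\<xi>'. phi (\<xi> - \<xi>')" lborel 1] by simp
qed

lemma tendsto_visible_intensity: "((\<lambda>\<tau>::real. (1 - exp (- (2 * pi) / \<tau>)) / (2 * pi)) \<longlongrightarrow> 1 / (2 * pi)) (at_right 0)"
proof -
  have "((\<lambda>\<tau>::real. (1 - exp (- (2 * pi) / \<tau>)) / (2 * pi)) \<longlongrightarrow> inverse pi / 2) (at_right 0)"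
    by real_asymp
  then show ?thesis
    by (simp add: field_simps)
qed

theorem mainTheorem6:
  fixes M :: "real \<Rightarrow> 'w measure"
    and \<Phi> :: "real \<Rightarrow> 'w \<Rightarrow> ((real^2) \<times> real) set"
    and \<rho> :: "real \<Rightarrow> real^2 \<Rightarrow> real"
  assumes pp: "\<forall>\<tau>>0. poisson_process (M \<tau>) (\<Phi> \<tau>) (storm_intensity \<tau>)"
    and intensity: "\<forall>\<tau>>0. \<forall>B\<in>sets lborel.
        (\<integral>\<^sup>+\<omega>. ecard (visible (\<Phi> \<tau> \<omega>) \<inter> B) \<partial>M \<tau>) = (\<integral>\<^sup>+\<xi>\<in>B. ennreal (\<rho> \<tau> \<xi>) \<partial>lborel)"
    and cont: "\<forall>\<tau>>0. continuous_on UNIV (\<rho> \<tau>)"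
  shows "\<forall>\<xi>. ((\<lambda>\<tau>. \<rho> \<tau> \<xi>) \<longlongrightarrow> phi 0 / (\<integral>\<xi>'. phi (\<xi> - \<xi>') \<partial>lborel)) (at_right 0)
             \<and> phi 0 / (\<integral>\<xi>'. phi (\<xi> - \<xi>') \<partial>lborel) = 1 / (2 * pi)"
proof
  fix \<xi> :: "real^2"
  have exact: "\<rho> \<tau> \<xi> = (1 - exp (- (2 * pi) / \<tau>)) / (2 * pi)" if "0 < \<tau>" for \<tau>
  proof -
    interpret storm_process "M \<tau>" "\<Phi> \<tau>" \<tau>
      using pp that by unfold_locales auto
    show ?thesis
      using intensity cont that by (intro visible_intensity_eq) (auto simp: continuous_on_eq_continuous_at)
  qed
  have "\<forall>\<^sub>F \<tau> in at_right 0. (1 - exp (- (2 * pi) / \<tau>)) / (2 * pi) = \<rho> \<tau> \<xi>"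
    using exact by (auto simp: eventually_at_right_field intro!: exI[of _ 1])
  then have "((\<lambda>\<tau>. \<rho> \<tau> \<xi>) \<longlongrightarrow> 1 / (2 * pi)) (at_right 0)"
    by (rule Lim_transform_eventually[OF tendsto_visible_intensity])
  then show "((\<lambda>\<tau>. \<rho> \<tau> \<xi>) \<longlongrightarrow> phi 0 / (\<integral>\<xi>'. phi (\<xi> - \<xi>') \<partial>lborel)) (at_right 0)
             \<and> phi 0 / (\<integral>\<xi>'. phi (\<xi> - \<xi>') \<partial>lborel) = 1 / (2 * pi)"
    by (simp add: integral_phi_translate phi_0)
qed

end
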